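(* Let $\varepsilon>0$, $\kappa\ge\frac14$, $\Delta t>0$, $C_4=\frac{1}{1-e^{-2}}$, $\gamma^{(0)}=3C_4(1+\kappa)$, $\gamma_1^{(0)}=\frac32C_4(1+\kappa)$, $\gamma_3^{(0)}=\frac12C_4(1+\kappa)$, $\alpha_0=\ln\Big(\frac{\gamma^{(0)}+\frac12\kappa}{\gamma^{(0)}-\frac12\kappa}\Big)$, and suppose $A\ge(\gamma^{(0)}-\frac{\kappa}{4})^4\alpha_0^{-2}\varepsilon^{-2}$. Let $u^{-2},u^{-1},u^0$ be real periodic grid functions with equal means, and let $u^{n+1}$, $n\ge0$, be defined by $$u^{n+1}=e^{-\Delta tL_N}u^n-A\Delta t^3\phi_0(L_N)\Delta_N^2(u^{n+1}-u^n)-\Delta t\,\phi_0(L_N)f_N(u^n)-\Delta t\,\phi_1(L_N)\Big(\tfrac32f_N(u^n)-2f_N(u^{n-1})+\tfrac12f_N(u^{n-2})\Big)-\Delta t\,\phi_2(L_N)\Big(\tfrac12f_N(u^n)-f_N(u^{n-1})+\tfrac12f_N(u^{n-2})\Big).$$ Then for all $k\ge0$, $$E_N(u^k)\le E_N(u^0)+\gamma_1^{(0)}\|\nabla_N(u^0-u^{-1})\|_2^2+\gamma_3^{(0)}\|\nabla_N(u^{-1}-u^{-2})\|_2^2.$$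
   Context: Setting: $\Omega=(0,1)^2$, $N=2K+1$, $h=1/N$, grid $x_i=ih$, $y_j=jh$; periodic grid functions have discrete Fourier expansions $f_{i,j}=\sum_{k,\ell=-K}^{K}\hat f_{k,\ell}\exp(2\pi\mathrm{i}(kx_i+\ell y_j))$. Spectral operators act as Fourier multipliers: $\mathcal D_{Nx}$, $\mathcal D_{Ny}$ by $2\pi\mathrm{i}k$, $2\pi\mathrm{i}\ell$; $\nabla_N f=(\mathcal D_{Nx}f,\mathcal D_{Ny}f)$, $\nabla_N\cdot(f_1,f_2)=\mathcal D_{Nx}f_1+\mathcal D_{Ny}f_2$, $\Delta_N$ has multiplier $-\lambda_{k,\ell}$, $\lambda_{k,\ell}=(2k\pi)^2+(2\ell\pi)^2$. Inner product $\langle f,g\rangle=h^2\sum_{i,j}f_{i,j}g_{i,j}$, $\|f\|_2=\langle f,f\rangle^{1/2}$. $L_N=\varepsilon^2\Delta_N^2-\kappa\Delta_N$ with multiplier $\Lambda_{k,\ell}=\varepsilon^2\lambda_{k,\ell}^2+\kappa\lambda_{k,\ell}$; $e^{-\Delta tL_N}$ has multiplier $e^{-\Delta t\Lambda_{k,\ell}}$. With $g_0(x)=\frac{1-e^{-x}}{x}$, $g_1(x)=\frac{1-g_0(x)}{x}$, $g_2(x)=\frac{1-2g_1(x)}{x}$, the operators $\phi_j(L_N)$, $j=0,1,2$, are the multipliers $g_j(\Delta t\Lambda_{k,\ell})$ on nonzero modes (equivalently $\phi_0=(\Delta tL_N)^{-1}(I-e^{-\Delta tL_N})$, $\phi_1=(\Delta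 tL_N)^{-1}(I-\phi_0)$, $\phi_2=(\Delta tL_N)^{-1}(I-2\phi_1)$), applied to zero-mean grid functions. Nonlinearity (pointwise): $f_N(u)=\nabla_N\cdot\Big(\frac{\nabla_N u}{1+|\nabla_N u|^2}\Big)+\kappa\Delta_N u$. Discrete energy: $E_N(\phi)=h^2\sum_{i,j}\big(-\frac12\ln(1+|\nabla_N\phi|^2)_{i,j}\big)+\frac{\varepsilon^2}{2}\|\Delta_N\phi\|_2^2$. *)

theory Defs
  imports Complex_Main
begin

text \<open>Grid functions on the (2K+1) x (2K+1) periodic grid, x_i = i h, h = 1/N, N = 2K+1.
  Only the values at indices i, j < N are relevant.\<close>
type_synonym grid = "nat \<Rightarrow> nat \<Rightarrow> real"

definition gridN :: "nat \<Rightarrow> nat" where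
  "gridN K = 2 * K + 1"

definition gridh :: "nat \<Rightarrow> real" where
  "gridh K = 1 / real (gridN K)"

text \<open>Discrete Fourier coefficients: f_{i,j} = sum_{k,l=-K..K} fhat_{k,l} exp(2 pi i (k x_i + l y_j)).\<close>
definition dft :: "nat \<Rightarrow> grid \<Rightarrow> int \<Rightarrow> int \<Rightarrow> complex" where
  "dft K f k l = (1 / of_nat ((gridN K)\<^sup>2)) *
     (\<Sum>i<gridN K. \<Sum>j<gridN K. complex_of_real (f i j) *
        cis (- 2 * pi * (real_of_int k * real i + real_of_int l * real j) / real (gridN K)))"

text \<open>Fourier multiplier operator with symbol m (real part taken; for the symbols
  used here the result is real anyway).\<close>
definition fmult :: "nat \<Rightarrow> (int \<Rightarrow> int \<Rightarrow> complex) \<Rightarrow> grid \<Rightarrow> grid" where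
  "fmult K m f i j = Re (\<Sum>k\<in>{- int K..int K}. \<Sum>l\<in>{- int K..int K}.
      m k l * dft K f k l *
      cis (2 * pi * (real_of_int k * real i + real_of_int l * real j) / real (gridN K)))"

definition DNx :: "nat \<Rightarrow> grid \<Rightarrow> grid" where
  "DNx K = fmult K (\<lambda>k l. \<i> * complex_of_real (2 * pi * real_of_int k))"

definition DNy :: "nat \<Rightarrow> grid \<Rightarrow> grid" where
  "DNy K = fmult K (\<lambda>k l. \<i> * complex_of_real (2 * pi * real_of_int l))"

definition lam :: "int \<Rightarrow> int \<Rightarrow> real" where
  "lam k l = (2 * real_of_int k * pi)\<^sup>2 + (2 * real_of_int l * pi)\<^sup>2"

definition LapN :: "nat \<Rightarrow> grid \<Rightarrow> grid" where
  "LapN K = fmult K (\<lambda>k l. complex_of_real (- lam k l))"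

definition Lap2N :: "nat \<Rightarrow> grid \<Rightarrow> grid" where
  "Lap2N K = fmult K (\<lambda>k l. complex_of_real ((lam k l)\<^sup>2))"

text \<open>Symbol of L_N = eps^2 Delta_N^2 - kappa Delta_N\<close>
definition LamL :: "real \<Rightarrow> real \<Rightarrow> int \<Rightarrow> int \<Rightarrow> real" where
  "LamL eps kappa k l = eps\<^sup>2 * (lam k l)\<^sup>2 + kappa * lam k l"

definition expL :: "nat \<Rightarrow> real \<Rightarrow> real \<Rightarrow> real \<Rightarrow> grid \<Rightarrow> grid" where
  "expL K eps kappa dt = fmult K (\<lambda>k l. complex_of_real (exp (- dt * LamL eps kappa k l)))"

text \<open>g_0, g_1, g_2, continuously extended at 0 (the zero mode is irrelevant, since
  the phi_j are only applied to zero-mean grid functions).\<close>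
definition g0 :: "real \<Rightarrow> real" where
  "g0 x = (if x = 0 then 1 else (1 - exp (- x)) / x)"

definition g1 :: "real \<Rightarrow> real" where
  "g1 x = (if x = 0 then 1/2 else (1 - g0 x) / x)"

definition g2 :: "real \<Rightarrow> real" where
  "g2 x = (if x = 0 then 1/3 else (1 - 2 * g1 x) / x)"

definition phiL :: "(real \<Rightarrow> real) \<Rightarrow> nat \<Rightarrow> real \<Rightarrow> real \<Rightarrow> real \<Rightarrow> grid \<Rightarrow> grid" where
  "phiL g K eps kappa dt = fmult K (\<lambda>k l. complex_of_real (g (dt * LamL eps kappa k l)))"

definition gradsq :: "nat \<Rightarrow> grid \<Rightarrow> grid" where
  "gradsq K u i j = (DNx K u i j)\<^sup>2 + (DNy K u i j)\<^sup>2"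

definition fN :: "nat \<Rightarrow> real \<Rightarrow> grid \<Rightarrow> grid" where
  "fN K kappa u i j =
     DNx K (\<lambda>a b. DNx K u a b / (1 + gradsq K u a b)) i j
   + DNy K (\<lambda>a b. DNy K u a b / (1 + gradsq K u a b)) i j
   + kappa * LapN K u i j"

definition ip :: "nat \<Rightarrow> grid \<Rightarrow> grid \<Rightarrow> real" where
  "ip K f g = (gridh K)\<^sup>2 * (\<Sum>i<gridN K. \<Sum>j<gridN K. f i j * g i j)"

definition norm2sq :: "nat \<Rightarrow> grid \<Rightarrow> real" where
  "norm2sq K f = ip K f f"

definition gradnorm2sq :: "nat \<Rightarrow> grid \<Rightarrow> real" where
  "gradnorm2sq K f = norm2sq K (DNx K f) + norm2sq K (DNy K f)"

definition gmean :: "nat \<Rightarrow> grid \<Rightarrow> real" where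
  "gmean K f = (gridh K)\<^sup>2 * (\<Sum>i<gridN K. \<Sum>j<gridN K. f i j)"

definition EN :: "nat \<Rightarrow> real \<Rightarrow> grid \<Rightarrow> real" where
  "EN K eps \<phi> = (gridh K)\<^sup>2 * (\<Sum>i<gridN K. \<Sum>j<gridN K. - (1/2) * ln (1 + gradsq K \<phi> i j))
      + eps\<^sup>2 / 2 * norm2sq K (LapN K \<phi>)"

definition C4 :: real where "C4 = 1 / (1 - exp (- 2))"
definition gamma0 :: "real \<Rightarrow> real" where "gamma0 kappa = 3 * C4 * (1 + kappa)"
definition gamma10 :: "real \<Rightarrow> real" where "gamma10 kappa = 3/2 * C4 * (1 + kappa)"
definition gamma30 :: "real \<Rightarrow> real" where "gamma30 kappa = 1/2 * C4 * (1 + kappa)"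
definition alpha0 :: "real \<Rightarrow> real" where
  "alpha0 kappa = ln ((gamma0 kappa + kappa / 2) / (gamma0 kappa - kappa / 2))"

end

theory Submission
  imports Defs
begin

text \<open>Every operator of the scheme is a Fourier multiplier, so by Parseval the scheme decouples
  into one scalar equation per mode. Testing the mode equation against the increment
  \<open>U\<^sup>n\<^sup>+\<^sup>1 - U\<^sup>n\<close> turns the linear part into a quadratic form whose diagonal weight
  \<open>1 / (\<Delta>t g0) + A \<Delta>t\<^sup>2 \<lambda>\<^sup>2\<close> dominates \<open>\<epsilon>\<^sup>2 \<lambda>\<^sup>2 / 2 + (5 + 2 \<kappa> + \<gamma>\<^sub>1) \<lambda>\<close> uniformly in
  \<open>\<Delta>t\<close> once \<open>A\<close> is as large as assumed. The energy density \<open>-ln (1 + |p|\<^sup>2) / 2\<close> has Hessian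
  bounded by the identity and its flux \<open>p / (1 + |p|\<^sup>2)\<close> is Lipschitz, so the nonlinear history
  terms are absorbed by the gradient norms of the last three increments. Hence the modified energy
  \<open>E\<^sub>N(u\<^sup>n) + \<gamma>\<^sub>1 |\<nabla>\<^sub>N(u\<^sup>n - u\<^sup>n\<^sup>-\<^sup>1)|\<^sup>2 + \<gamma>\<^sub>3 |\<nabla>\<^sub>N(u\<^sup>n\<^sup>-\<^sup>1 - u\<^sup>n\<^sup>-\<^sup>2)|\<^sup>2\<close> is nonincreasing.\<close>

section \<open>Discrete Fourier analysis on the periodic grid\<close>

lemma gridN_pos: "0 < gridN K"
  by (simp add: gridN_def)

abbreviation gridNr :: "nat \<Rightarrow> real" where
  "gridNr K \<equiv> real (gridN K)"

lemma gridNr_nonzero [simp]: "gridNr K \<noteq> 0"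
  using gridN_pos[of K] by simp

abbreviation modes :: "nat \<Rightarrow> int set" where
  "modes K \<equiv> {- int K..int K}"

lemma sum_cis_multiples_eq_0:
  fixes d :: int and N :: nat
  assumes "d \<noteq> 0" and "\<bar>d\<bar> < int N"
  shows "(\<Sum>x<N. cis (2 * pi * real_of_int d * real x / real N)) = 0"
proof -
  have N: "0 < N" using assms by linarith
  define z where "z = cis (2 * pi * real_of_int d / real N)"
  have z1: "z \<noteq> 1"
  proof
    assume "z = 1"
    hence "cos (2 * pi * real_of_int d / real N) = 1" by (metis cis.simps(1) one_complex.simps(1) z_def)
    then obtain m :: int where "2 * pi * real_of_int d / real N = real_of_int m * 2 * pi"
      by (auto simp: cos_one_2pi_int)
    hence "real_of_int d = real_of_int m * real N" using N by (simp add: field_simps)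
    hence "int N dvd d" by (metis dvd_triv_right of_int_eq_iff of_int_mult of_int_of_nat_eq)
    thus False using dvd_imp_le_int[of d "int N"] assms by auto
  qed
  have "z ^ N = cis (2 * pi * real_of_int d)" using N by (simp add: z_def DeMoivre field_simps)
  hence zN: "z ^ N = 1" by (simp add: cis_multiple_2pi)
  have "(\<Sum>x<N. cis (2 * pi * real_of_int d * real x / real N)) = (\<Sum>x<N. z ^ x)"
    by (simp add: z_def DeMoivre field_simps)
  also have "\<dots> = (z ^ N - 1) / (z - 1)" using z1 by (rule geometric_sum)
  finally show ?thesis using zN by simp
qed

lemma sum_modes_reindex: "(\<Sum>k\<in>modes K. f k) = (\<Sum>x<gridN K. f (int x - int K))"
proof -
  have "(\<lambda>x. int x - int K) ` {..<gridN K} = modes K"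
  proof (rule set_eqI, rule iffI)
    fix k assume "k \<in> modes K"
    hence "nat (k + int K) < gridN K" "k = int (nat (k + int K)) - int K" by (auto simp: gridN_def)
    thus "k \<in> (\<lambda>x. int x - int K) ` {..<gridN K}" by blast
  qed (auto simp: gridN_def)
  moreover have "inj_on (\<lambda>x. int x - int K) {..<gridN K}" by (auto simp: inj_on_def)
  ultimately show ?thesis by (metis (no_types, lifting) sum.reindex_cong)
qed

lemma sum_cis_orthogonal_modes:
  assumes "k \<in> modes K" "k' \<in> modes K"
  shows "(\<Sum>i<gridN K. cis (2 * pi * real_of_int (k' - k) * real i / gridNr K))
         = (if k = k' then of_nat (gridN K) else 0)"
  using assms sum_cis_multiples_eq_0[of "k' - k" "gridN K"] by (auto simp: gridN_def)

lemma sum_cis_orthogonal_points: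
  assumes "i < gridN K" "i' < gridN K"
  shows "(\<Sum>k\<in>modes K. cis (2 * pi * real_of_int k * (real i - real i') / gridNr K))
         = (if i = i' then of_nat (gridN K) else 0)"
proof (cases "i = i'")
  case True
  thus ?thesis by (simp add: gridN_def)
next
  case False
  define d where "d = int i - int i'"
  have d: "d \<noteq> 0" "\<bar>d\<bar> < int (gridN K)" using assms False by (auto simp: d_def)
  have "(\<Sum>k\<in>modes K. cis (2 * pi * real_of_int k * (real i - real i') / gridNr K))
      = (\<Sum>x<gridN K. cis (2 * pi * real_of_int (int x - int K) * real_of_int d / gridNr K))"
    by (simp add: sum_modes_reindex d_def)
  also have "\<dots> = (\<Sum>x<gridN K. cis (- 2 * pi * real K * real_of_int d / gridNr K) *
                      cis (2 * pi * real_of_int d * real x / gridNr K))"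
    by (rule sum.cong) (simp_all add: cis_mult field_simps)
  also have "\<dots> = 0"
    by (simp add: sum_distrib_left[symmetric] sum_cis_multiples_eq_0[OF d])
  finally show ?thesis using False by simp
qed

lemma sum_swap4:
  "(\<Sum>k\<in>A. \<Sum>l\<in>B. \<Sum>i\<in>C. \<Sum>j\<in>D. F k l i j) = (\<Sum>i\<in>C. \<Sum>j\<in>D. \<Sum>k\<in>A. \<Sum>l\<in>B. F k l i j)"
proof -
  have "(\<Sum>k\<in>A. \<Sum>l\<in>B. \<Sum>i\<in>C. \<Sum>j\<in>D. F k l i j) = (\<Sum>k\<in>A. \<Sum>i\<in>C. \<Sum>j\<in>D. \<Sum>l\<in>B. F k l i j)"
    by (intro sum.cong refl) (subst sum.swap, rule sum.cong[OF refl], rule sum.swap)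
  also have "\<dots> = (\<Sum>i\<in>C. \<Sum>j\<in>D. \<Sum>k\<in>A. \<Sum>l\<in>B. F k l i j)"
    by (subst sum.swap, rule sum.cong[OF refl], rule sum.swap)
  finally show ?thesis .
qed

lemma sum_sum_mult_const:
  fixes c :: "'a::comm_semiring_1"
  shows "(\<Sum>k\<in>I. \<Sum>l\<in>J. c * (a k * b l)) = c * ((\<Sum>k\<in>I. a k) * (\<Sum>l\<in>J. b l))"
  by (simp add: sum_distrib_left sum_distrib_right mult.assoc) (rule sum.swap)

definition fourier_char :: "nat \<Rightarrow> int \<Rightarrow> int \<Rightarrow> nat \<Rightarrow> nat \<Rightarrow> complex" where
  "fourier_char K k l i j = cis (2 * pi * (real_of_int k * real i + real_of_int l * real j) / gridNr K)"

lemma dft_fourier_char: "dft K f k l = (1 / of_nat ((gridN K)\<^sup>2)) *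
     (\<Sum>i<gridN K. \<Sum>j<gridN K. complex_of_real (f i j) * cnj (fourier_char K k l i j))"
  unfolding dft_def fourier_char_def by (simp add: cis_cnj)

lemma fmult_fourier_char: "fmult K m f i j = Re (\<Sum>k\<in>modes K. \<Sum>l\<in>modes K.
      m k l * dft K f k l * fourier_char K k l i j)"
  unfolding fmult_def fourier_char_def by simp

lemma cnj_fourier_char: "cnj (fourier_char K k l i j) = fourier_char K (- k) (- l) i j"
proof -
  have "- (2 * pi * (real_of_int k * real i + real_of_int l * real j) / gridNr K)
      = 2 * pi * (real_of_int (- k) * real i + real_of_int (- l) * real j) / gridNr K"
    by (simp add: divide_simps) (simp add: algebra_simps)
  thus ?thesis unfolding fourier_char_def by (simp only: cis_cnj)
qed

lemma dft_uminus_freq: "dft K f (- k) (- l) = cnj (dft K f k l)"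
  unfolding dft_fourier_char by (simp add: cnj_fourier_char)

lemma dft_inversion:
  assumes i: "i < gridN K" and j: "j < gridN K"
  shows "(\<Sum>k\<in>modes K. \<Sum>l\<in>modes K. dft K f k l * fourier_char K k l i j) = complex_of_real (f i j)"
proof -
  let ?N = "gridN K"
  define A where "A = (\<lambda>k i'. cis (2 * pi * real_of_int k * (real i - real i') / gridNr K))"
  define B where "B = (\<lambda>l j'. cis (2 * pi * real_of_int l * (real j - real j') / gridNr K))"
  have char: "cnj (fourier_char K k l i' j') * fourier_char K k l i j = A k i' * B l j'" for k l i' j'
    unfolding fourier_char_def A_def B_def
    by (simp add: cis_cnj cis_mult diff_divide_distrib add_divide_distrib algebra_simps)
  have "(\<Sum>k\<in>modes K. \<Sum>l\<in>modes K. dft K f k l * fourier_char K k l i j)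
      = (\<Sum>k\<in>modes K. \<Sum>l\<in>modes K. \<Sum>i'<?N. \<Sum>j'<?N.
           (1 / of_nat (?N\<^sup>2)) * complex_of_real (f i' j') * (A k i' * B l j'))"
    unfolding dft_fourier_char
    by (simp add: sum_distrib_left sum_distrib_right) (intro sum.cong refl, simp add: mult.assoc char[symmetric])
  also have "\<dots> = (\<Sum>i'<?N. \<Sum>j'<?N. \<Sum>k\<in>modes K. \<Sum>l\<in>modes K.
           (1 / of_nat (?N\<^sup>2)) * complex_of_real (f i' j') * (A k i' * B l j'))"
    by (rule sum_swap4)
  also have "\<dots> = (\<Sum>i'<?N. \<Sum>j'<?N. (1 / of_nat (?N\<^sup>2)) * complex_of_real (f i' j') *
        ((\<Sum>k\<in>modes K. A k i') * (\<Sum>l\<in>modes K. B l j')))"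
    by (intro sum.cong refl) (rule sum_sum_mult_const)
  also have "\<dots> = (\<Sum>i'<?N. \<Sum>j'<?N. if i = i' then (if j = j' then complex_of_real (f i' j') else 0) else 0)"
  proof (intro sum.cong refl)
    fix i' j' assume "i' \<in> {..<?N}" "j' \<in> {..<?N}"
    moreover have "(of_nat ?N :: complex) \<noteq> 0" using gridN_pos[of K] by simp
    ultimately show "(1 / of_nat (?N\<^sup>2)) * complex_of_real (f i' j') *
        ((\<Sum>k\<in>modes K. A k i') * (\<Sum>l\<in>modes K. B l j'))
      = (if i = i' then (if j = j' then complex_of_real (f i' j') else 0) else 0)"
      by (simp add: A_def B_def sum_cis_orthogonal_points i j power2_eq_square)
  qed
  also have "\<dots> = (\<Sum>i'<?N. if i = i' then (\<Sum>j'<?N. if j = j' then complex_of_real (f i' j') else 0) else 0)"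
    by (intro sum.cong refl) auto
  also have "\<dots> = complex_of_real (f i j)"
    using i j by (simp add: sum.delta')
  finally show ?thesis .
qed

definition hermitian :: "(int \<Rightarrow> int \<Rightarrow> complex) \<Rightarrow> bool" where
  "hermitian m \<longleftrightarrow> (\<forall>k l. m (- k) (- l) = cnj (m k l))"

lemma hermitian_of_real: "(\<And>k l. r (- k) (- l) = r k l) \<Longrightarrow> hermitian (\<lambda>k l. complex_of_real (r k l))"
  by (simp add: hermitian_def)

lemma sum_modes_uminus:
  "(\<Sum>k\<in>modes K. \<Sum>l\<in>modes K. g (- k) (- l)) = (\<Sum>k\<in>modes K. \<Sum>l\<in>modes K. g k l)"
proof -
  have neg: "(\<Sum>k\<in>modes K. h (- k)) = (\<Sum>k\<in>modes K. h k)" for h :: "int \<Rightarrow> 'a"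
    by (rule sum.reindex_bij_witness[of _ uminus uminus]) auto
  show ?thesis using neg[of "\<lambda>k. \<Sum>l\<in>modes K. g k (- l)"] neg[of "g _"] by simp
qed

text \<open>A Hermitian symbol makes the Fourier sum in \<^const>\<open>fmult\<close> real, so taking the real part loses nothing.\<close>

lemma of_real_fmult:
  assumes "hermitian m"
  shows "complex_of_real (fmult K m f i j) =
    (\<Sum>k\<in>modes K. \<Sum>l\<in>modes K. m k l * dft K f k l * fourier_char K k l i j)"
proof -
  define S where "S = (\<Sum>k\<in>modes K. \<Sum>l\<in>modes K. m k l * dft K f k l * fourier_char K k l i j)"
  have "cnj S = (\<Sum>k\<in>modes K. \<Sum>l\<in>modes K.
      m (- k) (- l) * dft K f (- k) (- l) * fourier_char K (- k) (- l) i j)"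
    unfolding S_def using assms by (simp add: hermitian_def dft_uminus_freq cnj_fourier_char)
  also have "\<dots> = S"
    unfolding S_def by (rule sum_modes_uminus)
  finally have "Im S = 0" by (metis cnj.sel(2) neg_equal_zero)
  hence "complex_of_real (Re S) = S" by (simp add: complex_eq_iff)
  thus ?thesis unfolding fmult_fourier_char S_def by simp
qed

lemma dft_fmult:
  assumes "hermitian m" and k: "k \<in> modes K" and l: "l \<in> modes K"
  shows "dft K (fmult K m f) k l = m k l * dft K f k l"
proof -
  let ?N = "gridN K"
  define P where "P = (\<lambda>k' i. cis (2 * pi * real_of_int (k' - k) * real i / gridNr K))"
  define Q where "Q = (\<lambda>l' j. cis (2 * pi * real_of_int (l' - l) * real j / gridNr K))"
  have char: "fourier_char K k' l' i j * cnj (fourier_char K k l i j) = P k' i * Q l' j" for k' l' i j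
    unfolding fourier_char_def P_def Q_def
    by (simp add: cis_cnj cis_mult diff_divide_distrib add_divide_distrib algebra_simps)
  have "dft K (fmult K m f) k l = (\<Sum>i<?N. \<Sum>j<?N. \<Sum>k'\<in>modes K. \<Sum>l'\<in>modes K.
        (1 / of_nat (?N\<^sup>2)) * (m k' l' * dft K f k' l') * (P k' i * Q l' j))"
    unfolding dft_fourier_char of_real_fmult[OF assms(1)]
    by (simp add: sum_distrib_left sum_distrib_right) (intro sum.cong refl, simp add: mult.assoc char[symmetric])
  also have "\<dots> = (\<Sum>k'\<in>modes K. \<Sum>l'\<in>modes K. \<Sum>i<?N. \<Sum>j<?N.
        (1 / of_nat (?N\<^sup>2)) * (m k' l' * dft K f k' l') * (P k' i * Q l' j))"
    by (rule sum_swap4[symmetric])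
  also have "\<dots> = (\<Sum>k'\<in>modes K. \<Sum>l'\<in>modes K. (1 / of_nat (?N\<^sup>2)) * (m k' l' * dft K f k' l') *
        ((\<Sum>i<?N. P k' i) * (\<Sum>j<?N. Q l' j)))"
    by (intro sum.cong refl) (rule sum_sum_mult_const)
  also have "\<dots> = (\<Sum>k'\<in>modes K. \<Sum>l'\<in>modes K.
        if k = k' then (if l = l' then m k' l' * dft K f k' l' else 0) else 0)"
  proof (intro sum.cong refl)
    fix k' l' assume "k' \<in> modes K" "l' \<in> modes K"
    moreover have "(of_nat ?N :: complex) \<noteq> 0" using gridN_pos[of K] by simp
    ultimately show "(1 / of_nat (?N\<^sup>2)) * (m k' l' * dft K f k' l') * ((\<Sum>i<?N. P k' i) * (\<Sum>j<?N. Q l' j))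
      = (if k = k' then (if l = l' then m k' l' * dft K f k' l' else 0) else 0)"
      unfolding P_def Q_def using sum_cis_orthogonal_modes k l by (simp add: power2_eq_square)
  qed
  also have "\<dots> = (\<Sum>k'\<in>modes K. if k = k' then (\<Sum>l'\<in>modes K. if l = l' then m k' l' * dft K f k' l' else 0) else 0)"
    by (intro sum.cong refl) auto
  also have "\<dots> = m k l * dft K f k l" using k l by (simp add: sum.delta')
  finally show ?thesis .
qed

lemma parseval:
  "complex_of_real (ip K f g) = (\<Sum>k\<in>modes K. \<Sum>l\<in>modes K. dft K f k l * cnj (dft K g k l))"
proof -
  let ?N = "gridN K"
  have cnj_dft: "cnj (dft K g k l) = (1 / of_nat (?N\<^sup>2)) *
      (\<Sum>i<?N. \<Sum>j<?N. complex_of_real (g i j) * fourier_char K k l i j)" for k l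
    unfolding dft_fourier_char by simp
  have "complex_of_real (ip K f g) = (1 / of_nat (?N\<^sup>2)) *
      (\<Sum>i<?N. \<Sum>j<?N. complex_of_real (f i j) * complex_of_real (g i j))"
    unfolding ip_def gridh_def by (simp add: power_divide)
  also have "\<dots> = (1 / of_nat (?N\<^sup>2)) * (\<Sum>i<?N. \<Sum>j<?N.
      (\<Sum>k\<in>modes K. \<Sum>l\<in>modes K. dft K f k l * fourier_char K k l i j) * complex_of_real (g i j))"
    by (simp add: dft_inversion)
  also have "\<dots> = (\<Sum>i<?N. \<Sum>j<?N. \<Sum>k\<in>modes K. \<Sum>l\<in>modes K.
      dft K f k l * ((1 / of_nat (?N\<^sup>2)) * (complex_of_real (g i j) * fourier_char K k l i j)))"
    by (simp add: sum_distrib_left sum_distrib_right algebra_simps)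
  also have "\<dots> = (\<Sum>k\<in>modes K. \<Sum>l\<in>modes K. \<Sum>i<?N. \<Sum>j<?N.
      dft K f k l * ((1 / of_nat (?N\<^sup>2)) * (complex_of_real (g i j) * fourier_char K k l i j)))"
    by (rule sum_swap4[symmetric])
  also have "\<dots> = (\<Sum>k\<in>modes K. \<Sum>l\<in>modes K. dft K f k l * cnj (dft K g k l))"
    unfolding cnj_dft by (simp add: sum_distrib_left)
  finally show ?thesis .
qed

definition mode_sum :: "nat \<Rightarrow> (int \<Rightarrow> int \<Rightarrow> 'a::comm_monoid_add) \<Rightarrow> 'a" where
  "mode_sum K \<phi> = (\<Sum>k\<in>modes K. \<Sum>l\<in>modes K. \<phi> k l)"

lemma mode_sum_mono:
  "(\<And>k l. k \<in> modes K \<Longrightarrow> l \<in> modes K \<Longrightarrow> (f k l :: real) \<le> g k l) \<Longrightarrow> mode_sum K f \<le> mode_sum K g"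
  unfolding mode_sum_def by (intro sum_mono) auto

lemma mode_sum_cong:
  "(\<And>k l. k \<in> modes K \<Longrightarrow> l \<in> modes K \<Longrightarrow> f k l = g k l) \<Longrightarrow> mode_sum K f = mode_sum K g"
  unfolding mode_sum_def by (intro sum.cong) auto

lemma ip_mode_sum: "ip K f g = mode_sum K (\<lambda>k l. Re (dft K f k l * cnj (dft K g k l)))"
proof -
  have "ip K f g = Re (complex_of_real (ip K f g))" by simp
  thus ?thesis unfolding parseval mode_sum_def by simp
qed

lemma norm2sq_mode_sum: "norm2sq K f = mode_sum K (\<lambda>k l. (cmod (dft K f k l))\<^sup>2)"
  by (simp add: norm2sq_def ip_mode_sum complex_mult_cnj cmod_power2)

lemma dft_diff: "dft K (\<lambda>a b. f a b - g a b) k l = dft K f k l - dft K g k l"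
  by (simp add: dft_def sum_subtractf right_diff_distrib left_diff_distrib)

lemma dft_add: "dft K (\<lambda>a b. f a b + g a b) k l = dft K f k l + dft K g k l"
  by (simp add: dft_def sum.distrib distrib_left distrib_right)

lemma dft_scale: "dft K (\<lambda>a b. c * f a b) k l = complex_of_real c * dft K f k l"
  by (simp add: dft_def sum_distrib_left algebra_simps)

lemma dft_cong: "(\<And>i j. i < gridN K \<Longrightarrow> j < gridN K \<Longrightarrow> f i j = g i j) \<Longrightarrow> dft K f = dft K g"
  unfolding dft_def by (intro ext sum.cong refl) auto

lemma fmult_diff: "fmult K m (\<lambda>a b. f a b - g a b) i j = fmult K m f i j - fmult K m g i j"
  by (simp add: fmult_def dft_diff algebra_simps sum_subtractf)

lemma lam_uminus [simp]: "lam (- k) (- l) = lam k l"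
  by (simp add: lam_def power2_eq_square)

lemma lam_nonneg: "0 \<le> lam k l"
  by (simp add: lam_def)

lemma LamL_uminus [simp]: "LamL eps kappa (- k) (- l) = LamL eps kappa k l"
  by (simp add: LamL_def)

lemma dft_DNx: "k \<in> modes K \<Longrightarrow> l \<in> modes K \<Longrightarrow>
    dft K (DNx K f) k l = \<i> * complex_of_real (2 * pi * real_of_int k) * dft K f k l"
  unfolding DNx_def by (rule dft_fmult) (simp add: hermitian_def)

lemma dft_DNy: "k \<in> modes K \<Longrightarrow> l \<in> modes K \<Longrightarrow>
    dft K (DNy K f) k l = \<i> * complex_of_real (2 * pi * real_of_int l) * dft K f k l"
  unfolding DNy_def by (rule dft_fmult) (simp add: hermitian_def)

lemma dft_LapN: "k \<in> modes K \<Longrightarrow> l \<in> modes K \<Longrightarrow>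
    dft K (LapN K f) k l = complex_of_real (- lam k l) * dft K f k l"
  unfolding LapN_def by (rule dft_fmult) (rule hermitian_of_real, simp)

lemma dft_Lap2N: "k \<in> modes K \<Longrightarrow> l \<in> modes K \<Longrightarrow>
    dft K (Lap2N K f) k l = complex_of_real ((lam k l)\<^sup>2) * dft K f k l"
  unfolding Lap2N_def by (rule dft_fmult) (rule hermitian_of_real, simp)

lemma dft_expL: "k \<in> modes K \<Longrightarrow> l \<in> modes K \<Longrightarrow>
    dft K (expL K eps kappa dt f) k l = complex_of_real (exp (- dt * LamL eps kappa k l)) * dft K f k l"
  unfolding expL_def by (rule dft_fmult) (rule hermitian_of_real, simp)

lemma dft_phiL: "k \<in> modes K \<Longrightarrow> l \<in> modes K \<Longrightarrow>
    dft K (phiL g K eps kappa dt f) k l = complex_of_real (g (dt * LamL eps kappa k l)) * dft K f k l"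
  unfolding phiL_def by (rule dft_fmult) (rule hermitian_of_real, simp)

lemma gradnorm2sq_mode_sum: "gradnorm2sq K f = mode_sum K (\<lambda>k l. lam k l * (cmod (dft K f k l))\<^sup>2)"
  unfolding gradnorm2sq_def norm2sq_mode_sum mode_sum_def sum.distrib[symmetric]
  by (intro sum.cong refl)
     (simp add: dft_DNx dft_DNy norm_mult power_mult_distrib lam_def algebra_simps)

lemma gradnorm2sq_nonneg: "0 \<le> gradnorm2sq K f"
  unfolding gradnorm2sq_mode_sum mode_sum_def by (intro sum_nonneg mult_nonneg_nonneg lam_nonneg) auto

lemma norm2sq_LapN_mode_sum: "norm2sq K (LapN K f) = mode_sum K (\<lambda>k l. (lam k l)\<^sup>2 * (cmod (dft K f k l))\<^sup>2)"
  unfolding norm2sq_mode_sum by (rule mode_sum_cong) (simp add: dft_LapN norm_mult power_mult_distrib)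

lemma ip_DNx_left: "ip K (DNx K f) g = - ip K f (DNx K g)"
  unfolding ip_mode_sum mode_sum_def sum_negf[symmetric]
  by (intro sum.cong refl) (simp add: dft_DNx algebra_simps)

lemma ip_DNy_left: "ip K (DNy K f) g = - ip K f (DNy K g)"
  unfolding ip_mode_sum mode_sum_def sum_negf[symmetric]
  by (intro sum.cong refl) (simp add: dft_DNy algebra_simps)

section \<open>Scalar inequalities\<close>

lemma le_of_nonneg_deriv_from_0:
  fixes h h' :: "real \<Rightarrow> real"
  assumes "\<And>t. (h has_real_derivative h' t) (at t)" "\<And>t. 0 \<le> t \<Longrightarrow> 0 \<le> h' t" "0 \<le> x"
  shows "h 0 \<le> h x"
  using deriv_nonneg_imp_mono[of 0 x h h'] assms by auto

lemma exp_neg_pade_lower: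
  fixes x :: real
  assumes "0 \<le> x"
  shows "2 - x \<le> (2 + x) * exp (- x)"
proof -
  let ?h = "\<lambda>t::real. (2 + t) * exp (- t) - 2 + t"
  have "?h 0 \<le> ?h x"
  proof (rule le_of_nonneg_deriv_from_0[where h' = "\<lambda>t. 1 - (1 + t) * exp (- t)"])
    fix t :: real
    show "(?h has_real_derivative 1 - (1 + t) * exp (- t)) (at t)"
      by (auto intro!: derivative_eq_intros simp: algebra_simps)
    assume "0 \<le> t"
    have "1 + t \<le> exp t" by (rule exp_ge_add_one_self)
    hence "(1 + t) * exp (- t) \<le> exp t * exp (- t)" by (intro mult_right_mono) auto
    also have "\<dots> = 1" by (simp add: exp_minus)
    finally show "0 \<le> 1 - (1 + t) * exp (- t)" by simp
  qed (use assms in auto)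
  thus ?thesis by simp
qed

lemma exp_neg_le_taylor2:
  fixes x :: real
  assumes "0 \<le> x"
  shows "exp (- x) \<le> 1 - x + x\<^sup>2 / 2"
proof -
  let ?h = "\<lambda>t::real. 1 - t + t\<^sup>2 / 2 - exp (- t)"
  have "?h 0 \<le> ?h x"
  proof (rule le_of_nonneg_deriv_from_0[where h' = "\<lambda>t. - 1 + t + exp (- t)"])
    fix t :: real
    show "(?h has_real_derivative - 1 + t + exp (- t)) (at t)"
      by (auto intro!: derivative_eq_intros simp: algebra_simps power2_eq_square)
    show "0 \<le> - 1 + t + exp (- t)" using exp_ge_add_one_self[of "-t"] by simp
  qed (use assms in auto)
  thus ?thesis by simp
qed

lemma exp_lower_bound_quadratic:
  fixes x :: real
  assumes "0 \<le> x"
  shows "x\<^sup>2 - 2 \<le> (2 * x - 2) * exp x"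
proof -
  let ?h = "\<lambda>t::real. (2 * t - 2) * exp t - t\<^sup>2 + 2"
  have "?h 0 \<le> ?h x"
  proof (rule le_of_nonneg_deriv_from_0[where h' = "\<lambda>t. 2 * t * (exp t - 1)"])
    fix t :: real
    show "(?h has_real_derivative 2 * t * (exp t - 1)) (at t)"
      by (auto intro!: derivative_eq_intros simp: algebra_simps power2_eq_square)
    assume "0 \<le> t"
    moreover have "1 \<le> exp t" using \<open>0 \<le> t\<close> by simp
    ultimately show "0 \<le> 2 * t * (exp t - 1)" by simp
  qed (use assms in auto)
  thus ?thesis by simp
qed

lemma g0_pos: "0 \<le> x \<Longrightarrow> 0 < g0 x"
proof -
  assume x: "0 \<le> x"
  show ?thesis
  proof (cases "x = 0")
    case False
    hence "exp (- x) < 1" using x by simp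
    thus ?thesis using x False by (simp add: g0_def)
  qed (simp add: g0_def)
qed

lemma exp_neg_eq_g0: "exp (- x) = 1 - x * g0 x"
  by (cases "x = 0") (auto simp: g0_def)

lemma g1_bounds: assumes "0 \<le> x" shows "0 \<le> g1 x" "g1 x \<le> g0 x" "g1 x \<le> 1/2"
proof -
  have "0 \<le> g1 x \<and> g1 x \<le> g0 x \<and> g1 x \<le> 1/2"
  proof (cases "x = 0")
    case True thus ?thesis by (simp add: g0_def g1_def)
  next
    case False
    hence x: "0 < x" using assms by simp
    let ?e = "exp (- x)"
    have g0: "g0 x = (1 - ?e) / x" using False by (simp add: g0_def)
    have g1: "g1 x = (1 - (1 - ?e) / x) / x" using False by (simp add: g1_def g0_def)
    have e1: "1 - x \<le> ?e" using exp_ge_add_one_self[of "-x"] by simp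
    have e2: "(1 + x) * ?e \<le> 1"
    proof -
      have "(1 + x) * ?e \<le> exp x * ?e" by (intro mult_right_mono) (auto simp: exp_ge_add_one_self)
      thus ?thesis by (simp add: exp_minus)
    qed
    have e3: "?e \<le> 1 - x + x\<^sup>2/2" using exp_neg_le_taylor2 assms by simp
    have "0 \<le> 1 - (1 - ?e) / x" using e1 x by (simp add: field_simps)
    hence a: "0 \<le> g1 x" using g1 x by simp
    have "x * ((1 + x) * ?e) \<le> x * 1" using e2 x by (intro mult_left_mono) auto
    hence e2': "x * ?e + x * (x * ?e) \<le> x" by (simp add: algebra_simps)
    have "(1 - (1 - ?e) / x) / x \<le> (1 - ?e) / x"
      using x e2' by (simp add: field_simps algebra_simps)
    hence b: "g1 x \<le> g0 x" using g0 g1 by simp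
    have "(1 - (1 - ?e) / x) / x \<le> 1/2"
      using x e3 by (simp add: field_simps power2_eq_square algebra_simps)
    thus ?thesis using a b g1 by simp
  qed
  thus "0 \<le> g1 x" "g1 x \<le> g0 x" "g1 x \<le> 1/2" by auto
qed

lemma g2_bounds: assumes "0 \<le> x" shows "0 \<le> g2 x" "g2 x \<le> g0 x"
proof -
  have "0 \<le> g2 x \<and> g2 x \<le> g0 x"
  proof (cases "x = 0")
    case True thus ?thesis by (simp add: g0_def g2_def)
  next
    case False
    hence x: "0 < x" using assms by simp
    let ?e = "exp (- x)"
    have g0: "g0 x = (1 - ?e) / x" using False by (simp add: g0_def)
    have g1: "g1 x = (1 - (1 - ?e) / x) / x" using False by (simp add: g1_def g0_def)
    have g2: "g2 x = (1 - 2 * g1 x) / x" using False by (simp add: g2_def)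
    have a: "0 \<le> g2 x" using g1_bounds(3)[OF assms] x g2 by simp
    have h: "x\<^sup>2 - 2 \<le> (2 * x - 2) * exp x" by (rule exp_lower_bound_quadratic) (use assms in simp)
    have "(x\<^sup>2 - 2) * ?e \<le> (2 * x - 2) * exp x * ?e" by (rule mult_right_mono[OF h]) simp
    hence h2: "(x\<^sup>2 - 2) * ?e \<le> 2 * x - 2" by (simp add: exp_minus_inverse mult.assoc)
    have l: "(1 - 2 * ((1 - (1 - ?e) / x) / x)) / x = (x\<^sup>2 - 2 * x + 2 - 2 * ?e) / x ^ 3"
      using x by (simp add: field_simps power2_eq_square power3_eq_cube)
    have r: "(1 - ?e) / x = (x\<^sup>2 * (1 - ?e)) / x ^ 3"
      using x by (simp add: field_simps power2_eq_square power3_eq_cube)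
    have "x\<^sup>2 - 2 * x + 2 - 2 * ?e \<le> x\<^sup>2 * (1 - ?e)" using h2 by (simp add: algebra_simps)
    hence "(x\<^sup>2 - 2 * x + 2 - 2 * ?e) / x ^ 3 \<le> (x\<^sup>2 * (1 - ?e)) / x ^ 3"
      using x by (intro divide_right_mono) auto
    hence "(1 - 2 * ((1 - (1 - ?e) / x) / x)) / x \<le> (1 - ?e) / x" using l r by simp
    thus ?thesis using a g0 g1 g2 by simp
  qed
  thus "0 \<le> g2 x" "g2 x \<le> g0 x" by auto
qed

text \<open>After dividing the mode equation of the scheme by \<open>\<Delta>t g0\<close>, the first and second differences of
  the nonlinear history enter with these weights.\<close>

definition rho1 :: "real \<Rightarrow> real" where
  "rho1 x = (3 * g1 x + g2 x) / (2 * g0 x)"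

definition rho2 :: "real \<Rightarrow> real" where
  "rho2 x = (g1 x + g2 x) / (2 * g0 x)"

lemma rho_bounds:
  assumes "0 \<le> x"
  shows "0 \<le> rho1 x" "rho1 x \<le> 2" "0 \<le> rho2 x" "rho2 x \<le> 1"
  using g0_pos[OF assms] g1_bounds[OF assms] g2_bounds[OF assms]
  by (simp_all add: rho1_def rho2_def field_simps)

lemma inverse_dt_g0_bounds:
  fixes dt L :: real
  assumes dt: "0 < dt" and L: "0 \<le> L"
  shows "L \<le> 1 / (dt * g0 (dt * L))" "1 / dt + L / 2 \<le> 1 / (dt * g0 (dt * L))"
proof -
  have "L \<le> 1 / (dt * g0 (dt * L)) \<and> 1 / dt + L / 2 \<le> 1 / (dt * g0 (dt * L))"
  proof (cases "L = 0")
    case True thus ?thesis using dt by (simp add: g0_def)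
  next
    case False
    hence Lp: "0 < L" using L by simp
    define x where "x = dt * L"
    have x: "0 < x" using dt Lp by (simp add: x_def mult_pos_pos)
    let ?e = "exp (- x)"
    have e1: "?e < 1" using x by simp
    have e0: "0 < ?e" by simp
    have eq: "1 / (dt * g0 x) = L / (1 - ?e)"
      using x dt e1 Lp by (simp add: g0_def x_def field_simps)
    have "L \<le> L / (1 - ?e)" using Lp e1 e0 by (simp add: field_simps)
    moreover have "1 / dt + L / 2 \<le> L / (1 - ?e)"
    proof -
      have B: "2 - x \<le> (2 + x) * ?e" using exp_neg_pade_lower x by simp
      have "(1 / dt + L / 2) * (1 - ?e) \<le> L"
      proof -
        have "(1 / dt + L / 2) * (1 - ?e) = (L / x) * ((1 + x / 2) * (1 - ?e))"
          using dt x by (simp add: x_def field_simps)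
        also have "(1 + x / 2) * (1 - ?e) \<le> x" using B by (simp add: field_simps)
        hence "(L / x) * ((1 + x / 2) * (1 - ?e)) \<le> (L / x) * x"
          using Lp x by (intro mult_left_mono) auto
        also have "(L / x) * x = L" using x by simp
        finally show ?thesis .
      qed
      thus ?thesis using e1 by (simp add: field_simps)
    qed
    ultimately show ?thesis using eq by (simp add: x_def)
  qed
  thus "L \<le> 1 / (dt * g0 (dt * L))" "1 / dt + L / 2 \<le> 1 / (dt * g0 (dt * L))" by auto
qed

lemma gamma_polynomial_ineq:
  fixes k :: real assumes "0 \<le> k"
  shows "2 * k\<^sup>2 * (34/5 + 14/5 * k) * (34/5 + 33/10 * k) ^ 3 \<le> (3 + 11/4 * k) ^ 4 * (3 + 5/2 * k)\<^sup>2"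
proof -
  have eq: "5000 * ((12 + 11 * k) ^ 4 * (6 + 5 * k)\<^sup>2) - 2048 * (k\<^sup>2 * (34 + 14 * k) * (68 + 33 * k) ^ 3)
    = 3732480000 + 19906560000 * k + 22324990976 * k^2 + 11475787264 * k^3 + 6275259936 * k^4
      + 3506277984 * k^5 + 799739336 * k^6"
    by (simp add: algebra_simps eval_nat_numeral)
  have "0 \<le> 3732480000 + 19906560000 * k + 22324990976 * k^2 + 11475787264 * k^3 + 6275259936 * k^4
      + 3506277984 * k^5 + (799739336::real) * k^6" using assms by simp
  hence a: "2048 * (k\<^sup>2 * (34 + 14 * k) * (68 + 33 * k) ^ 3) \<le> 5000 * ((12 + 11 * k) ^ 4 * (6 + 5 * k)\<^sup>2)"
    using eq by linarith
  have b: "2 * k\<^sup>2 * (34/5 + 14/5 * k) * (34/5 + 33/10 * k) ^ 3 = (2048 * (k\<^sup>2 * (34 + 14 * k) * (68 + 33 * k) ^ 3)) / 5120000"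
    by (simp add: field_simps eval_nat_numeral)
  have c: "(3 + 11/4 * k) ^ 4 * (3 + 5/2 * k)\<^sup>2 = (5000 * ((12 + 11 * k) ^ 4 * (6 + 5 * k)\<^sup>2)) / 5120000"
    by (simp add: field_simps eval_nat_numeral)
  show ?thesis unfolding b c by (rule divide_right_mono[OF a]) simp
qed

lemma C4_bounds: "1 \<le> C4" "C4 \<le> 6/5"
proof -
  have e1: "5/2 \<le> exp (1::real)" using exp_lower_Taylor_quadratic[of 1] by simp
  have "exp (2::real) = exp 1 * exp 1" by (simp flip: exp_add)
  also have "(5/2) * (5/2) \<le> exp (1::real) * exp 1" using e1 by (intro mult_mono) auto
  hence "6 \<le> exp (1::real) * exp 1" by simp
  finally have e2: "6 \<le> exp (2::real)" by simp
  have p: "0 < exp (-2::real)" by simp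
  have q: "exp (-2::real) \<le> 1/6" using e2 by (simp add: exp_minus field_simps)
  have q1: "exp (-2::real) < 1" using q by simp
  show "1 \<le> C4" using p q1 by (simp add: C4_def field_simps)
  show "C4 \<le> 6/5" using p q by (simp add: C4_def field_simps)
qed

lemma gamma_weights:
  assumes "0 \<le> kappa"
  shows "0 \<le> gamma10 kappa" "0 \<le> gamma30 kappa"
    "3/4 + kappa \<le> gamma10 kappa - gamma30 kappa" "3/8 + kappa / 4 \<le> gamma30 kappa"
proof -
  have "1 * (1 + kappa) \<le> C4 * (1 + kappa)"
    using C4_bounds(1) assms by (intro mult_right_mono) auto
  thus "0 \<le> gamma10 kappa" "0 \<le> gamma30 kappa"
    "3/4 + kappa \<le> gamma10 kappa - gamma30 kappa" "3/8 + kappa / 4 \<le> gamma30 kappa"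
    using assms by (simp_all add: gamma10_def gamma30_def field_simps)
qed

lemma gamma0_bounds:
  assumes "0 \<le> kappa"
  shows "3 * (1 + kappa) \<le> gamma0 kappa" "gamma0 kappa \<le> 18/5 * (1 + kappa)"
proof -
  have "1 * (1 + kappa) \<le> C4 * (1 + kappa)" "C4 * (1 + kappa) \<le> 6/5 * (1 + kappa)"
    using C4_bounds assms by (intro mult_right_mono; simp)+
  thus "3 * (1 + kappa) \<le> gamma0 kappa" "gamma0 kappa \<le> 18/5 * (1 + kappa)"
    by (simp_all add: gamma0_def)
qed

lemma alpha0_bounds:
  assumes "0 < kappa"
  shows "0 < alpha0 kappa" "alpha0 kappa \<le> kappa / (gamma0 kappa - kappa / 2)"
proof -
  define G where "G = gamma0 kappa"
  have G: "0 < G - kappa / 2" using gamma0_bounds(1)[of kappa] assms by (simp add: G_def)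
  define r where "r = (G + kappa / 2) / (G - kappa / 2)"
  have r: "1 < r" using G assms by (simp add: r_def field_simps)
  have alpha: "alpha0 kappa = ln r" by (simp add: alpha0_def r_def G_def)
  show "0 < alpha0 kappa" using alpha r by simp
  have "ln r \<le> r - 1" using r by (intro ln_le_minus_one) simp
  also have "r - 1 = kappa / (G - kappa / 2)" using G by (simp add: r_def field_simps)
  finally show "alpha0 kappa \<le> kappa / (gamma0 kappa - kappa / 2)" using alpha by (simp add: G_def)
qed

text \<open>Since \<open>alpha0 \<le> kappa / (gamma0 - kappa / 2)\<close> and \<open>1 \<le> C4 \<le> 6/5\<close>, the hypothesis on \<open>A\<close>
  reduces to the polynomial inequality above.\<close>

lemma A_lower_bound:
  fixes eps kappa A :: real
  assumes eps: "0 < eps" and k: "0 < kappa"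
    and A: "A \<ge> (gamma0 kappa - kappa / 4) ^ 4 / ((alpha0 kappa)\<^sup>2 * eps\<^sup>2)"
  shows "2 * ((5 + 2 * kappa + gamma10 kappa) - kappa) * ((5 + 2 * kappa + gamma10 kappa) - kappa / 2) ^ 3
         \<le> A * eps\<^sup>2"
proof -
  define G where "G = gamma0 kappa"
  have G1: "3 * (1 + kappa) \<le> G" and G2: "G \<le> 18/5 * (1 + kappa)"
    using gamma0_bounds[of kappa] k by (simp_all add: G_def)
  have g10: "gamma10 kappa = G / 2" by (simp add: G_def gamma0_def gamma10_def)
  have Gp: "0 < G - kappa / 2" using G1 k by simp
  have alsq: "(alpha0 kappa)\<^sup>2 \<le> (kappa / (G - kappa / 2))\<^sup>2"
    using alpha0_bounds[OF k] by (intro power_mono) (auto simp: G_def)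
  define P where "P = (G - kappa / 4) ^ 4"
  have Pp: "0 \<le> P" using G1 k by (simp add: P_def)
  have "P / ((kappa / (G - kappa / 2))\<^sup>2 * eps\<^sup>2) \<le> P / ((alpha0 kappa)\<^sup>2 * eps\<^sup>2)"
    using alsq alpha0_bounds(1)[OF k] eps Pp by (intro divide_left_mono mult_right_mono mult_pos_pos) auto
  also have "\<dots> \<le> A" using A by (simp add: P_def G_def)
  finally have "P * (G - kappa / 2)\<^sup>2 / kappa\<^sup>2 \<le> A * eps\<^sup>2"
    using eps k Gp by (simp add: field_simps power2_eq_square)
  moreover have "(3 + 11/4 * kappa) ^ 4 * (3 + 5/2 * kappa)\<^sup>2 \<le> P * (G - kappa / 2)\<^sup>2"
    unfolding P_def using G1 k by (intro mult_mono power_mono) auto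
  hence "2 * (34/5 + 14/5 * kappa) * (34/5 + 33/10 * kappa) ^ 3 \<le> P * (G - kappa / 2)\<^sup>2 / kappa\<^sup>2"
    using gamma_polynomial_ineq[of kappa] k by (simp add: field_simps)
  moreover have "2 * ((5 + 2 * kappa + gamma10 kappa) - kappa) * ((5 + 2 * kappa + gamma10 kappa) - kappa / 2) ^ 3
      \<le> 2 * (34/5 + 14/5 * kappa) * (34/5 + 33/10 * kappa) ^ 3"
    using G1 G2 g10 k by (intro mult_mono power_mono) auto
  ultimately show ?thesis by linarith
qed

lemma linear_le_inverse_dt_plus_stabilizer:
  fixes dt A c lm :: real
  assumes dt: "0 < dt" and c: "0 < c" and lm: "0 \<le> lm" and A: "c ^ 3 * lm \<le> A"
  shows "c * lm \<le> 1 / dt + A * dt\<^sup>2 * lm\<^sup>2"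
proof -
  have A0: "0 \<le> A" using A c lm by (meson order_trans zero_le_mult_iff zero_le_power less_imp_le)
  show ?thesis
  proof (cases "dt * (c * lm) \<le> 1")
    case True
    hence "c * lm \<le> 1 / dt" using dt by (simp add: field_simps)
    thus ?thesis using A0 by (simp add: add_increasing2)
  next
    case False
    hence big: "1 \<le> (dt * (c * lm))\<^sup>2" by (simp add: one_le_power)
    have "c * lm * (c * lm)\<^sup>2 = (c ^ 3 * lm) * lm\<^sup>2" by (simp add: power2_eq_square power3_eq_cube)
    also have "\<dots> \<le> A * lm\<^sup>2" using A by (rule mult_right_mono) simp
    also have "\<dots> \<le> A * lm\<^sup>2 * (dt * (c * lm))\<^sup>2"
      using mult_left_mono[OF big, of "A * lm\<^sup>2"] A0 by simp
    finally have "c * lm * (c * lm)\<^sup>2 \<le> (A * dt\<^sup>2 * lm\<^sup>2) * (c * lm)\<^sup>2"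
      by (simp add: power_mult_distrib algebra_simps)
    moreover have "0 < (c * lm)\<^sup>2" using False dt c lm by (cases "lm = 0") auto
    ultimately have "c * lm \<le> A * dt\<^sup>2 * lm\<^sup>2" by (rule mult_right_le_imp_le)
    thus ?thesis using dt by (simp add: add_increasing)
  qed
qed

text \<open>The stabilizer weight \<open>A \<Delta>t\<^sup>2 \<lambda>\<^sup>2\<close> compensates, uniformly in \<open>\<Delta>t\<close>, the part of \<open>Cp \<lambda>\<close> that
  \<open>1 / (\<Delta>t g0)\<close> cannot control.\<close>

lemma mode_weight_lower_bound:
  fixes eps kappa dt A Cp lm :: real
  assumes eps: "0 < eps" and k: "0 < kappa" and dt: "0 < dt" and lm: "0 \<le> lm"
    and Cp: "kappa \<le> Cp" and AC: "2 * (Cp - kappa) * (Cp - kappa / 2) ^ 3 \<le> A * eps\<^sup>2"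
  shows "eps\<^sup>2 * lm\<^sup>2 / 2 + Cp * lm \<le> 1 / (dt * g0 (dt * (eps\<^sup>2 * lm\<^sup>2 + kappa * lm))) + A * dt\<^sup>2 * lm\<^sup>2"
proof -
  define L where "L = eps\<^sup>2 * lm\<^sup>2 + kappa * lm"
  have L0: "0 \<le> L" using lm k by (simp add: L_def)
  have A0: "0 \<le> A"
  proof -
    have "0 \<le> 2 * (Cp - kappa) * (Cp - kappa / 2) ^ 3" using Cp k by simp
    hence "0 \<le> A * eps\<^sup>2" using AC by linarith
    thus ?thesis using eps by (simp add: zero_le_mult_iff)
  qed
  show ?thesis
  proof (cases "2 * (Cp - kappa) \<le> eps\<^sup>2 * lm")
    case True
    hence "(Cp - kappa) * lm \<le> (eps\<^sup>2 * lm / 2) * lm" using lm by (intro mult_right_mono) auto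
    hence "eps\<^sup>2 * lm\<^sup>2 / 2 + Cp * lm \<le> L" by (simp add: L_def power2_eq_square algebra_simps)
    thus ?thesis using inverse_dt_g0_bounds(1)[OF dt L0] A0 by (simp add: L_def add_increasing2)
  next
    case False
    define c where "c = Cp - kappa / 2"
    have c0: "0 < c" using Cp k by (simp add: c_def)
    have "c ^ 3 * (eps\<^sup>2 * lm) \<le> c ^ 3 * (2 * (Cp - kappa))" using False c0 by simp
    also have "\<dots> \<le> A * eps\<^sup>2" using AC by (simp add: c_def algebra_simps)
    finally have "c ^ 3 * lm \<le> A" using eps by (simp add: field_simps)
    hence "c * lm \<le> 1 / dt + A * dt\<^sup>2 * lm\<^sup>2" by (rule linear_le_inverse_dt_plus_stabilizer[OF dt c0 lm])
    moreover have "eps\<^sup>2 * lm\<^sup>2 / 2 + Cp * lm = c * lm + L / 2"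
      by (simp add: c_def L_def algebra_simps power2_eq_square)
    ultimately show ?thesis using inverse_dt_g0_bounds(2)[OF dt L0] by (simp add: L_def)
  qed
qed

lemma cauchy_schwarz_2: "(r1 * d1 + r2 * d2)\<^sup>2 \<le> (r1\<^sup>2 + r2\<^sup>2) * (d1\<^sup>2 + d2\<^sup>2)" for r1 r2 d1 d2 :: real
proof -
  have "(r1\<^sup>2 + r2\<^sup>2) * (d1\<^sup>2 + d2\<^sup>2) - (r1 * d1 + r2 * d2)\<^sup>2 = (r1 * d2 - r2 * d1)\<^sup>2"
    by (simp add: power2_eq_square algebra_simps)
  thus ?thesis by (metis diff_ge_0_iff_ge zero_le_power2)
qed

lemma young_ineq: "2 * (a * b) \<le> th * a\<^sup>2 + b\<^sup>2 / th" if "0 < th" for a b th :: real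
proof -
  have "0 \<le> (th * a - b)\<^sup>2 / th" using that by simp
  also have "(th * a - b)\<^sup>2 / th = th * a\<^sup>2 + b\<^sup>2 / th - 2 * (a * b)"
    using that by (simp add: power2_eq_square field_simps)
  finally show ?thesis by simp
qed

lemma four_mult_le_one_plus_sq: "4 * x \<le> (1 + x)\<^sup>2" for x :: real
  using zero_le_power2[of "1 - x"] by (simp add: power2_eq_square algebra_simps)

text \<open>Both pointwise estimates for the nonlinearity come from the line \<open>r = q + t d\<close> through gradient
  space and the flux \<open>r \<bullet> w / (1 + |r|\<^sup>2)\<close> along it.\<close>

lemma flux_line_has_derivative:
  fixes q1 q2 d1 d2 w1 w2 t :: real
  defines "r1 \<equiv> q1 + t * d1" and "r2 \<equiv> q2 + t * d2"
  shows "((\<lambda>t. ((q1 + t * d1) * w1 + (q2 + t * d2) * w2) / (1 + (q1 + t * d1)\<^sup>2 + (q2 + t * d2)\<^sup>2))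
     has_real_derivative (d1 * w1 + d2 * w2) / (1 + r1\<^sup>2 + r2\<^sup>2)
       - 2 * (r1 * w1 + r2 * w2) * (r1 * d1 + r2 * d2) / (1 + r1\<^sup>2 + r2\<^sup>2)\<^sup>2) (at t)"
proof -
  have s: "1 + r1\<^sup>2 + r2\<^sup>2 \<noteq> 0" by (simp add: add_pos_nonneg add_nonneg_eq_0_iff)
  have num: "((\<lambda>t. (q1 + t * d1) * w1 + (q2 + t * d2) * w2) has_real_derivative d1 * w1 + d2 * w2) (at t)"
    by (auto intro!: derivative_eq_intros)
  have den: "((\<lambda>t. 1 + (q1 + t * d1)\<^sup>2 + (q2 + t * d2)\<^sup>2) has_real_derivative 2 * r1 * d1 + 2 * r2 * d2) (at t)"
    unfolding r1_def r2_def by (auto intro!: derivative_eq_intros simp: algebra_simps)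
  have "((\<lambda>t. ((q1 + t * d1) * w1 + (q2 + t * d2) * w2) / (1 + (q1 + t * d1)\<^sup>2 + (q2 + t * d2)\<^sup>2))
     has_real_derivative ((d1 * w1 + d2 * w2) * (1 + r1\<^sup>2 + r2\<^sup>2)
       - (2 * r1 * d1 + 2 * r2 * d2) * (r1 * w1 + r2 * w2)) / (1 + r1\<^sup>2 + r2\<^sup>2) ^ Suc (Suc 0)) (at t)"
    using DERIV_quotient[OF num den] s by (simp add: r1_def r2_def)
  moreover have "((d1 * w1 + d2 * w2) * S - (2 * r1 * d1 + 2 * r2 * d2) * (r1 * w1 + r2 * w2)) / S ^ Suc (Suc 0)
     = (d1 * w1 + d2 * w2) / S - 2 * (r1 * w1 + r2 * w2) * (r1 * d1 + r2 * d2) / S\<^sup>2" if "S \<noteq> 0" for S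
    using that by (simp add: field_simps power2_eq_square)
  ultimately show ?thesis using s by simp
qed

lemma flux_line_derivative_bound:
  fixes r1 r2 d1 d2 w1 w2 th :: real
  assumes th: "0 < th"
  shows "(d1 * w1 + d2 * w2) / (1 + r1\<^sup>2 + r2\<^sup>2)
       - 2 * (r1 * w1 + r2 * w2) * (r1 * d1 + r2 * d2) / (1 + r1\<^sup>2 + r2\<^sup>2)\<^sup>2
     \<le> 3/4 * (th * (d1\<^sup>2 + d2\<^sup>2) + (w1\<^sup>2 + w2\<^sup>2) / th)"
proof -
  define s where "s = 1 + r1\<^sup>2 + r2\<^sup>2"
  define B where "B = th * (d1\<^sup>2 + d2\<^sup>2) + (w1\<^sup>2 + w2\<^sup>2) / th"
  define P where "P = (d1 * w1 + d2 * w2) / s"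
  define Q where "Q = 2 * (r1 * w1 + r2 * w2) * (r1 * d1 + r2 * d2) / s\<^sup>2"
  have s1: "1 \<le> s" by (simp add: s_def)
  have B0: "0 \<le> B" using th by (simp add: B_def)
  have "- 2 * ((r1 * w1 + r2 * w2) * (r1 * d1 + r2 * d2))
      \<le> th * (r1 * d1 + r2 * d2)\<^sup>2 + (r1 * w1 + r2 * w2)\<^sup>2 / th"
    using young_ineq[OF th, of "r1 * d1 + r2 * d2" "- (r1 * w1 + r2 * w2)"]
    by (simp only: power2_minus) (simp add: algebra_simps)
  also have "\<dots> \<le> th * ((r1\<^sup>2 + r2\<^sup>2) * (d1\<^sup>2 + d2\<^sup>2)) + ((r1\<^sup>2 + r2\<^sup>2) * (w1\<^sup>2 + w2\<^sup>2)) / th"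
    using cauchy_schwarz_2[of r1 d1 r2 d2] cauchy_schwarz_2[of r1 w1 r2 w2] th
    by (intro add_mono mult_left_mono divide_right_mono) auto
  also have "\<dots> = (r1\<^sup>2 + r2\<^sup>2) * B" by (simp add: B_def algebra_simps add_divide_distrib)
  also have "\<dots> \<le> (s\<^sup>2 / 4) * B"
    using four_mult_le_one_plus_sq[of "r1\<^sup>2 + r2\<^sup>2"] B0 by (intro mult_right_mono) (auto simp: s_def add.assoc)
  finally have Q: "- Q \<le> B / 4"
    using s1 unfolding Q_def by (simp add: field_simps)
  define dw where "dw = d1 * w1 + d2 * w2"
  have "2 * dw \<le> B"
    using young_ineq[OF th, of d1 w1] young_ineq[OF th, of d2 w2] unfolding B_def dw_def
    by (simp add: algebra_simps add_divide_distrib)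
  moreover have "dw / s \<le> max dw 0"
    using s1 by (cases "0 \<le> dw") (auto simp: divide_le_eq mult_le_cancel_left1 divide_nonpos_pos)
  ultimately have "P \<le> B / 2"
    using B0 unfolding P_def dw_def[symmetric] by linarith
  with Q have "P - Q \<le> 3/4 * B" by linarith
  thus ?thesis unfolding P_def Q_def s_def B_def .
qed

lemma flux_line_derivative_bound_diag:
  fixes r1 r2 d1 d2 :: real
  shows "(d1 * - d1 + d2 * - d2) / (1 + r1\<^sup>2 + r2\<^sup>2)
       - 2 * (r1 * - d1 + r2 * - d2) * (r1 * d1 + r2 * d2) / (1 + r1\<^sup>2 + r2\<^sup>2)\<^sup>2
     \<le> (d1\<^sup>2 + d2\<^sup>2) / 2"
proof -
  define s where "s = 1 + r1\<^sup>2 + r2\<^sup>2"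
  have s1: "1 \<le> s" by (simp add: s_def)
  have "2 * (r1 * d1 + r2 * d2)\<^sup>2 \<le> 2 * ((r1\<^sup>2 + r2\<^sup>2) * (d1\<^sup>2 + d2\<^sup>2))"
    using cauchy_schwarz_2 by simp
  also have "\<dots> = (2 * (r1\<^sup>2 + r2\<^sup>2)) * (d1\<^sup>2 + d2\<^sup>2)" by simp
  also have "\<dots> \<le> (s\<^sup>2 / 2) * (d1\<^sup>2 + d2\<^sup>2)"
    using four_mult_le_one_plus_sq[of "r1\<^sup>2 + r2\<^sup>2"] by (intro mult_right_mono) (auto simp: s_def add.assoc)
  finally have "2 * (r1 * d1 + r2 * d2)\<^sup>2 / s\<^sup>2 \<le> (d1\<^sup>2 + d2\<^sup>2) / 2"
    using s1 by (simp add: field_simps)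
  moreover have "0 \<le> (d1\<^sup>2 + d2\<^sup>2) / s" using s1 by simp
  moreover have "(d1 * - d1 + d2 * - d2) / s - 2 * (r1 * - d1 + r2 * - d2) * (r1 * d1 + r2 * d2) / s\<^sup>2
      = - ((d1\<^sup>2 + d2\<^sup>2) / s) + 2 * (r1 * d1 + r2 * d2)\<^sup>2 / s\<^sup>2"
    by (simp add: power2_eq_square algebra_simps diff_divide_distrib add_divide_distrib)
  ultimately show ?thesis unfolding s_def by linarith
qed

lemma flux_increment_bound:
  fixes q1 q2 d1 d2 w1 w2 th :: real
  assumes th: "0 < th"
  shows "\<bar>((q1 + d1) / (1 + (q1 + d1)\<^sup>2 + (q2 + d2)\<^sup>2) - q1 / (1 + q1\<^sup>2 + q2\<^sup>2)) * w1
       + ((q2 + d2) / (1 + (q1 + d1)\<^sup>2 + (q2 + d2)\<^sup>2) - q2 / (1 + q1\<^sup>2 + q2\<^sup>2)) * w2\<bar>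
     \<le> 3/4 * (th * (d1\<^sup>2 + d2\<^sup>2) + (w1\<^sup>2 + w2\<^sup>2) / th)"
proof -
  have one_sided: "((q1 + d1) / (1 + (q1 + d1)\<^sup>2 + (q2 + d2)\<^sup>2) - q1 / (1 + q1\<^sup>2 + q2\<^sup>2)) * v1
       + ((q2 + d2) / (1 + (q1 + d1)\<^sup>2 + (q2 + d2)\<^sup>2) - q2 / (1 + q1\<^sup>2 + q2\<^sup>2)) * v2
     \<le> 3/4 * (th * (d1\<^sup>2 + d2\<^sup>2) + (v1\<^sup>2 + v2\<^sup>2) / th)" for v1 v2
  proof -
    define psi where "psi = (\<lambda>t. ((q1 + t * d1) * v1 + (q2 + t * d2) * v2) / (1 + (q1 + t * d1)\<^sup>2 + (q2 + t * d2)\<^sup>2))"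
    define psi' where "psi' = (\<lambda>t. (d1 * v1 + d2 * v2) / (1 + (q1 + t * d1)\<^sup>2 + (q2 + t * d2)\<^sup>2)
         - 2 * ((q1 + t * d1) * v1 + (q2 + t * d2) * v2) * ((q1 + t * d1) * d1 + (q2 + t * d2) * d2)
           / (1 + (q1 + t * d1)\<^sup>2 + (q2 + t * d2)\<^sup>2)\<^sup>2)"
    have "(psi has_real_derivative psi' t) (at t)" for t
      unfolding psi_def psi'_def by (rule flux_line_has_derivative)
    then obtain z where "psi 1 - psi 0 = psi' z"
      using MVT2[of 0 1 psi psi'] by auto
    also have "\<dots> \<le> 3/4 * (th * (d1\<^sup>2 + d2\<^sup>2) + (v1\<^sup>2 + v2\<^sup>2) / th)"
      unfolding psi'_def by (rule flux_line_derivative_bound[OF th])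
    finally show ?thesis by (simp add: psi_def algebra_simps add_divide_distrib)
  qed
  from one_sided[of w1 w2] one_sided[of "- w1" "- w2"] show ?thesis
    unfolding abs_le_iff power2_minus mult_minus_right by linarith
qed

lemma neg_half_ln_tangent_bound:
  fixes p1 p2 d1 d2 :: real
  shows "- ln (1 + (p1 + d1)\<^sup>2 + (p2 + d2)\<^sup>2) / 2
     \<le> - ln (1 + p1\<^sup>2 + p2\<^sup>2) / 2 - (p1 * d1 + p2 * d2) / (1 + p1\<^sup>2 + p2\<^sup>2) + (d1\<^sup>2 + d2\<^sup>2) / 2"
proof -
  define s where "s = (\<lambda>t::real. 1 + (p1 + t * d1)\<^sup>2 + (p2 + t * d2)\<^sup>2)"
  have sp: "0 < s t" for t unfolding s_def by (simp add: add_pos_nonneg)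
  define phi where "phi = (\<lambda>t. - ln (s t) / 2)"
  define psi where "psi = (\<lambda>t. ((p1 + t * d1) * - d1 + (p2 + t * d2) * - d2) / s t)"
  have dphi: "(phi has_real_derivative psi t) (at t)" for t
  proof -
    have ds: "(s has_real_derivative 2 * (p1 + t * d1) * d1 + 2 * (p2 + t * d2) * d2) (at t)"
      unfolding s_def by (auto intro!: derivative_eq_intros simp: algebra_simps)
    have "(phi has_real_derivative - ((1 / s t) * (2 * (p1 + t * d1) * d1 + 2 * (p2 + t * d2) * d2)) / 2) (at t)"
      unfolding phi_def by (intro DERIV_cdivide DERIV_minus DERIV_chain2[OF DERIV_ln_divide[OF sp] ds])
    moreover have "- ((1 / s t) * (2 * (p1 + t * d1) * d1 + 2 * (p2 + t * d2) * d2)) / 2 = psi t"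
      unfolding psi_def using sp[of t] by (simp add: field_simps)
    ultimately show ?thesis by simp
  qed
  define psi' where "psi' = (\<lambda>t. (d1 * - d1 + d2 * - d2) / s t
       - 2 * ((p1 + t * d1) * - d1 + (p2 + t * d2) * - d2) * ((p1 + t * d1) * d1 + (p2 + t * d2) * d2) / (s t)\<^sup>2)"
  have dpsi: "(psi has_real_derivative psi' t) (at t)" for t
    unfolding psi_def psi'_def s_def by (rule flux_line_has_derivative)
  obtain z where z: "0 < z" "z < 1" "phi 1 - phi 0 = psi z"
    using MVT2[of 0 1 phi psi] dphi by auto
  obtain w where "psi z - psi 0 = z * psi' w"
    using MVT2[of 0 z psi psi'] dpsi z by auto
  also have "\<dots> \<le> z * ((d1\<^sup>2 + d2\<^sup>2) / 2)"
    using z unfolding psi'_def s_def by (intro mult_left_mono flux_line_derivative_bound_diag) auto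
  also have "\<dots> \<le> (d1\<^sup>2 + d2\<^sup>2) / 2" using z by (intro mult_left_le_one_le) auto
  finally have "phi 1 \<le> phi 0 + psi 0 + (d1\<^sup>2 + d2\<^sup>2) / 2" using z by linarith
  thus ?thesis by (simp add: phi_def psi_def s_def add_divide_distrib diff_divide_distrib)
qed

section \<open>Energy estimates\<close>

lemma ip_add_left: "ip K (\<lambda>a b. f a b + g a b) h = ip K f h + ip K g h"
  by (simp add: ip_def sum.distrib distrib_left distrib_right)

lemma ip_diff_left: "ip K (\<lambda>a b. f a b - g a b) h = ip K f h - ip K g h"
  by (simp add: ip_def sum_subtractf left_diff_distrib right_diff_distrib)

lemma DNx_diff: "DNx K (\<lambda>a b. f a b - g a b) i j = DNx K f i j - DNx K g i j"
  unfolding DNx_def by (rule fmult_diff)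

lemma DNy_diff: "DNy K (\<lambda>a b. f a b - g a b) i j = DNy K f i j - DNy K g i j"
  unfolding DNy_def by (rule fmult_diff)

definition flux_x :: "nat \<Rightarrow> grid \<Rightarrow> grid" where
  "flux_x K v = (\<lambda>a b. DNx K v a b / (1 + gradsq K v a b))"

definition flux_y :: "nat \<Rightarrow> grid \<Rightarrow> grid" where
  "flux_y K v = (\<lambda>a b. DNy K v a b / (1 + gradsq K v a b))"

definition nonlin :: "nat \<Rightarrow> grid \<Rightarrow> grid" where
  "nonlin K v = (\<lambda>a b. DNx K (flux_x K v) a b + DNy K (flux_y K v) a b)"

definition EN_ln :: "nat \<Rightarrow> grid \<Rightarrow> real" where
  "EN_ln K v = (gridh K)\<^sup>2 * (\<Sum>i<gridN K. \<Sum>j<gridN K. - (1/2) * ln (1 + gradsq K v i j))"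

lemma fN_eq_nonlin: "fN K kappa v = (\<lambda>i j. nonlin K v i j + kappa * LapN K v i j)"
  by (intro ext) (simp add: fN_def nonlin_def flux_x_def flux_y_def)

lemma EN_eq_EN_ln: "EN K eps v = EN_ln K v + eps\<^sup>2 / 2 * norm2sq K (LapN K v)"
  by (simp add: EN_def EN_ln_def)

lemma ip_nonlin_left: "ip K (nonlin K u) w = - ((gridh K)\<^sup>2 * (\<Sum>i<gridN K. \<Sum>j<gridN K.
      flux_x K u i j * DNx K w i j + flux_y K u i j * DNy K w i j))"
proof -
  have "ip K (nonlin K u) w = - ip K (flux_x K u) (DNx K w) - ip K (flux_y K u) (DNy K w)"
    unfolding nonlin_def by (simp add: ip_add_left ip_DNx_left ip_DNy_left)
  also have "\<dots> = - ((gridh K)\<^sup>2 * (\<Sum>i<gridN K. \<Sum>j<gridN K.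
      flux_x K u i j * DNx K w i j + flux_y K u i j * DNy K w i j))"
    by (simp add: ip_def sum.distrib algebra_simps)
  finally show ?thesis .
qed

lemma gradnorm2sq_sum: "gradnorm2sq K w = (gridh K)\<^sup>2 * (\<Sum>i<gridN K. \<Sum>j<gridN K.
      (DNx K w i j)\<^sup>2 + (DNy K w i j)\<^sup>2)"
  by (simp add: gradnorm2sq_def norm2sq_def ip_def sum.distrib algebra_simps power2_eq_square)

lemma EN_ln_tangent_bound:
  "EN_ln K v \<le> EN_ln K u + ip K (nonlin K u) (\<lambda>a b. v a b - u a b) + 1/2 * gradnorm2sq K (\<lambda>a b. v a b - u a b)"
proof -
  let ?d = "\<lambda>a b. v a b - u a b"
  let ?N = "gridN K"
  have pw: "- (1/2) * ln (1 + gradsq K v i j) \<le> - (1/2) * ln (1 + gradsq K u i j)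
     - (flux_x K u i j * DNx K ?d i j + flux_y K u i j * DNy K ?d i j)
     + 1/2 * ((DNx K ?d i j)\<^sup>2 + (DNy K ?d i j)\<^sup>2)" for i j
  proof -
    have t: "- ln (1 + (DNx K u i j + DNx K ?d i j)\<^sup>2 + (DNy K u i j + DNy K ?d i j)\<^sup>2) / 2
     \<le> - ln (1 + (DNx K u i j)\<^sup>2 + (DNy K u i j)\<^sup>2) / 2
       - (DNx K u i j * DNx K ?d i j + DNy K u i j * DNy K ?d i j) / (1 + (DNx K u i j)\<^sup>2 + (DNy K u i j)\<^sup>2)
       + ((DNx K ?d i j)\<^sup>2 + (DNy K ?d i j)\<^sup>2) / 2"
      by (rule neg_half_ln_tangent_bound)
    have e1: "DNx K u i j + DNx K ?d i j = DNx K v i j" by (simp add: DNx_diff)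
    have e2: "DNy K u i j + DNy K ?d i j = DNy K v i j" by (simp add: DNy_diff)
    show ?thesis using t unfolding e1 e2
      by (simp add: gradsq_def flux_x_def flux_y_def add_divide_distrib add.assoc)
  qed
  have "(\<Sum>i<?N. \<Sum>j<?N. - (1/2) * ln (1 + gradsq K v i j)) \<le> (\<Sum>i<?N. \<Sum>j<?N. - (1/2) * ln (1 + gradsq K u i j)
     - (flux_x K u i j * DNx K ?d i j + flux_y K u i j * DNy K ?d i j)
     + 1/2 * ((DNx K ?d i j)\<^sup>2 + (DNy K ?d i j)\<^sup>2))"
    by (intro sum_mono pw)
  also have "\<dots> = (\<Sum>i<?N. \<Sum>j<?N. - (1/2) * ln (1 + gradsq K u i j))
     - (\<Sum>i<?N. \<Sum>j<?N. flux_x K u i j * DNx K ?d i j + flux_y K u i j * DNy K ?d i j)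
     + 1/2 * (\<Sum>i<?N. \<Sum>j<?N. (DNx K ?d i j)\<^sup>2 + (DNy K ?d i j)\<^sup>2)"
    by (simp add: sum.distrib sum_subtractf sum_distrib_left add_divide_distrib sum_divide_distrib)
  finally have S: "(\<Sum>i<?N. \<Sum>j<?N. - (1/2) * ln (1 + gradsq K v i j)) \<le> \<dots>" .
  have h: "0 \<le> (gridh K)\<^sup>2" by simp
  have "EN_ln K v \<le> (gridh K)\<^sup>2 * ((\<Sum>i<?N. \<Sum>j<?N. - (1/2) * ln (1 + gradsq K u i j))
     - (\<Sum>i<?N. \<Sum>j<?N. flux_x K u i j * DNx K ?d i j + flux_y K u i j * DNy K ?d i j)
     + 1/2 * (\<Sum>i<?N. \<Sum>j<?N. (DNx K ?d i j)\<^sup>2 + (DNy K ?d i j)\<^sup>2))"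
    unfolding EN_ln_def by (rule mult_left_mono[OF S h])
  also have "\<dots> = EN_ln K u + ip K (nonlin K u) ?d + 1/2 * gradnorm2sq K ?d"
    unfolding EN_ln_def ip_nonlin_left gradnorm2sq_sum by (simp add: algebra_simps)
  finally show ?thesis .
qed

lemma nonlin_increment_bound:
  assumes th: "0 < th"
  shows "\<bar>ip K (\<lambda>a b. nonlin K u a b - nonlin K v a b) w\<bar>
    \<le> 3/4 * (th * gradnorm2sq K (\<lambda>a b. u a b - v a b) + gradnorm2sq K w / th)"
proof -
  let ?d = "\<lambda>a b. u a b - v a b"
  let ?N = "gridN K"
  define T where "T = (\<lambda>i j. (flux_x K u i j - flux_x K v i j) * DNx K w i j + (flux_y K u i j - flux_y K v i j) * DNy K w i j)"
  define R where "R = (\<lambda>i j. 3/4 * (th * ((DNx K ?d i j)\<^sup>2 + (DNy K ?d i j)\<^sup>2) + ((DNx K w i j)\<^sup>2 + (DNy K w i j)\<^sup>2) / th))"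
  have ipT: "ip K (\<lambda>a b. nonlin K u a b - nonlin K v a b) w = - ((gridh K)\<^sup>2 * (\<Sum>i<?N. \<Sum>j<?N. T i j))"
    unfolding ip_diff_left ip_nonlin_left T_def by (simp add: sum_subtractf algebra_simps)
  have RS: "3/4 * (th * gradnorm2sq K ?d + gradnorm2sq K w / th) = (gridh K)\<^sup>2 * (\<Sum>i<?N. \<Sum>j<?N. R i j)"
    unfolding gradnorm2sq_sum R_def
    by (simp add: sum.distrib sum_distrib_left sum_divide_distrib algebra_simps add_divide_distrib)
  have pw: "\<bar>T i j\<bar> \<le> R i j" for i j
  proof -
    let ?q1 = "DNx K v i j" and ?q2 = "DNy K v i j" and ?d1 = "DNx K ?d i j" and ?d2 = "DNy K ?d i j"
    have e1: "?q1 + ?d1 = DNx K u i j" by (simp add: DNx_diff)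
    have e2: "?q2 + ?d2 = DNy K u i j" by (simp add: DNy_diff)
    have Teq: "T i j = ((?q1 + ?d1) / (1 + (?q1 + ?d1)\<^sup>2 + (?q2 + ?d2)\<^sup>2) - ?q1 / (1 + ?q1\<^sup>2 + ?q2\<^sup>2)) * DNx K w i j
       + ((?q2 + ?d2) / (1 + (?q1 + ?d1)\<^sup>2 + (?q2 + ?d2)\<^sup>2) - ?q2 / (1 + ?q1\<^sup>2 + ?q2\<^sup>2)) * DNy K w i j"
      unfolding e1 e2 T_def flux_x_def flux_y_def gradsq_def by (simp add: add.assoc)
    show ?thesis unfolding Teq R_def by (rule flux_increment_bound[OF th])
  qed
  have "\<bar>\<Sum>i<?N. \<Sum>j<?N. T i j\<bar> \<le> (\<Sum>i<?N. \<Sum>j<?N. \<bar>T i j\<bar>)"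
    by (rule order_trans[OF sum_abs]) (intro sum_mono sum_abs)
  also have "\<dots> \<le> (\<Sum>i<?N. \<Sum>j<?N. R i j)" by (intro sum_mono pw)
  finally have "\<bar>\<Sum>i<?N. \<Sum>j<?N. T i j\<bar> \<le> (\<Sum>i<?N. \<Sum>j<?N. R i j)" .
  hence "(gridh K)\<^sup>2 * \<bar>\<Sum>i<?N. \<Sum>j<?N. T i j\<bar> \<le> (gridh K)\<^sup>2 * (\<Sum>i<?N. \<Sum>j<?N. R i j)"
    by (rule mult_left_mono) simp
  thus ?thesis unfolding ipT RS by (simp add: abs_mult)
qed

definition etd_rhs :: "nat \<Rightarrow> real \<Rightarrow> real \<Rightarrow> real \<Rightarrow> real \<Rightarrow> (int \<Rightarrow> grid) \<Rightarrow> int \<Rightarrow> grid" where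
  "etd_rhs K eps kappa dt A u n = (\<lambda>i j.
        expL K eps kappa dt (u n) i j
      - A * dt ^ 3 * phiL g0 K eps kappa dt (Lap2N K (\<lambda>a b. u (n + 1) a b - u n a b)) i j
      - dt * phiL g0 K eps kappa dt (fN K kappa (u n)) i j
      - dt * phiL g1 K eps kappa dt (\<lambda>a b. 3/2 * fN K kappa (u n) a b
            - 2 * fN K kappa (u (n - 1)) a b + 1/2 * fN K kappa (u (n - 2)) a b) i j
      - dt * phiL g2 K eps kappa dt (\<lambda>a b. 1/2 * fN K kappa (u n) a b
            - fN K kappa (u (n - 1)) a b + 1/2 * fN K kappa (u (n - 2)) a b) i j)"

definition etd_step :: "nat \<Rightarrow> real \<Rightarrow> real \<Rightarrow> real \<Rightarrow> real \<Rightarrow> (int \<Rightarrow> grid) \<Rightarrow> int \<Rightarrow> bool" where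
  "etd_step K eps kappa dt A u n \<longleftrightarrow>
     (\<forall>i<gridN K. \<forall>j<gridN K. u (n + 1) i j = etd_rhs K eps kappa dt A u n i j)"
lemma young_ineq_complex: "0 < th \<Longrightarrow> 2 * Re (a * cnj d) \<le> th * (cmod a)\<^sup>2 + (cmod d)\<^sup>2 / th"
  using young_ineq[of th "Re a" "Re d"] young_ineq[of th "Im a" "Im d"]
  by (simp add: cmod_power2 algebra_simps add_divide_distrib)

lemma mult_le_half_bound:
  fixes r R c X :: real
  assumes "0 \<le> r" "r \<le> R" "2 * c \<le> X" "0 \<le> X"
  shows "r * c \<le> R * X / 2"
proof -
  have "r * (2 * c) \<le> r * X" using assms by (intro mult_left_mono) auto
  also have "\<dots> \<le> R * X" using assms by (intro mult_right_mono) auto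
  finally show ?thesis by simp
qed

lemma mode_form_nonpos:
  fixes lm M r1 r2 Dn an bn cA cB kappa g1 g3 eps :: real
  assumes lm: "0 \<le> lm" and M: "eps\<^sup>2 * lm\<^sup>2 / 2 + (5 + 2 * kappa + g1) * lm \<le> M"
    and r1: "0 \<le> r1" "r1 \<le> 2" and r2: "0 \<le> r2" "r2 \<le> 1"
    and Dn: "0 \<le> Dn" and an: "0 \<le> an" and bn: "0 \<le> bn"
    and cA: "2 * cA \<le> an + Dn" and cB: "- 2 * cB \<le> bn / 2 + 2 * Dn"
    and k: "0 \<le> kappa" and gg: "3/4 + kappa \<le> g1 - g3" and g3: "3/8 + kappa / 4 \<le> g3"
  shows "(- M + lm / 2 + eps\<^sup>2 * lm\<^sup>2 / 2) * Dn + kappa * lm * r1 * cA - kappa * lm * r2 * cB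
     + 3/4 * (lm * r1\<^sup>2 * Dn) + 3/2 * (lm * r2\<^sup>2 * Dn) + g1 * lm * Dn
     + (3/4 + g3 - g1) * lm * an + (3/8 - g3) * lm * bn \<le> 0"
proof -
  have kl: "0 \<le> kappa * lm" and lD: "0 \<le> lm * Dn" using k lm Dn by simp_all
  have "r1 * cA \<le> an + Dn" using mult_le_half_bound[OF r1 cA] an Dn by simp
  hence t1: "kappa * lm * (r1 * cA) \<le> kappa * lm * (an + Dn)" using kl by (rule mult_left_mono)
  have "r2 * - cB \<le> bn / 4 + Dn" using mult_le_half_bound[OF r2, of "- cB" "bn / 2 + 2 * Dn"] cB bn Dn by simp
  hence t2: "kappa * lm * (r2 * - cB) \<le> kappa * lm * (bn / 4 + Dn)" using kl by (rule mult_left_mono)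
  have "r1\<^sup>2 \<le> 2\<^sup>2" "r2\<^sup>2 \<le> 1\<^sup>2" using r1 r2 by (intro power_mono; simp)+
  hence t3: "r1\<^sup>2 * (lm * Dn) \<le> 4 * (lm * Dn)" "r2\<^sup>2 * (lm * Dn) \<le> 1 * (lm * Dn)"
    using lD by (intro mult_right_mono; simp)+
  have t4: "(eps\<^sup>2 * lm\<^sup>2 / 2 + (5 + 2 * kappa + g1) * lm) * Dn \<le> M * Dn"
    using M Dn by (rule mult_right_mono)
  have t5: "(3/4 + g3 - g1 + kappa) * (lm * an) \<le> 0" "(3/8 - g3 + kappa / 4) * (lm * bn) \<le> 0"
    using gg g3 lm an bn by (intro mult_nonpos_nonneg; simp)+
  show ?thesis using t1 t2 t3 t4 t5 by (simp add: algebra_simps)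
qed

lemma etd_mode_residual:
  fixes u1 u0 um1 um2 p0 pm1 pm2 dt G0 G1 G2 A lm eps kappa :: real
  assumes dG: "dt * G0 \<noteq> 0"
    and sch: "u1 = (1 - dt * (eps\<^sup>2 * lm\<^sup>2 + kappa * lm) * G0) * u0 - (A * dt ^ 3 * G0 * lm\<^sup>2) * (u1 - u0)
       - (dt * G0) * (p0 - kappa * lm * u0)
       - (dt * G1) * (3/2 * (p0 - kappa * lm * u0) - 2 * (pm1 - kappa * lm * um1) + 1/2 * (pm2 - kappa * lm * um2))
       - (dt * G2) * (1/2 * (p0 - kappa * lm * u0) - (pm1 - kappa * lm * um1) + 1/2 * (pm2 - kappa * lm * um2))"
  shows "p0 + (1 / (dt * G0) + A * dt\<^sup>2 * lm\<^sup>2) * (u1 - u0) + eps\<^sup>2 * lm\<^sup>2 * u0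
      + (3 * G1 + G2) / (2 * G0) * (p0 - pm1 - kappa * lm * (u0 - um1))
      - (G1 + G2) / (2 * G0) * (pm1 - pm2 - kappa * lm * (um1 - um2)) = 0"
proof -
  have "dt * G0 * (p0 + (1 / (dt * G0) + A * dt\<^sup>2 * lm\<^sup>2) * (u1 - u0) + eps\<^sup>2 * lm\<^sup>2 * u0
      + (3 * G1 + G2) / (2 * G0) * (p0 - pm1 - kappa * lm * (u0 - um1))
      - (G1 + G2) / (2 * G0) * (pm1 - pm2 - kappa * lm * (um1 - um2)))
    = u1 - ((1 - dt * (eps\<^sup>2 * lm\<^sup>2 + kappa * lm) * G0) * u0 - (A * dt ^ 3 * G0 * lm\<^sup>2) * (u1 - u0)
       - (dt * G0) * (p0 - kappa * lm * u0)
       - (dt * G1) * (3/2 * (p0 - kappa * lm * u0) - 2 * (pm1 - kappa * lm * um1) + 1/2 * (pm2 - kappa * lm * um2))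
       - (dt * G2) * (1/2 * (p0 - kappa * lm * u0) - (pm1 - kappa * lm * um1) + 1/2 * (pm2 - kappa * lm * um2)))"
    using dG by (simp add: field_simps power2_eq_square power3_eq_cube)
  thus ?thesis using dG sch by simp
qed
lemma mode_energy_identity:
  fixes U0 U1 Um1 Um2 P0 Pm1 Pm2 :: complex
    and dt G0 G1 G2 A lm Lam eps kappa e :: real
  assumes dt: "0 < dt" and G0: "0 < G0" and e: "e = 1 - dt * Lam * G0"
    and Lam: "Lam = eps\<^sup>2 * lm\<^sup>2 + kappa * lm"
    and sch: "U1 = of_real e * U0 - of_real (A * dt ^ 3 * G0 * lm\<^sup>2) * (U1 - U0)
       - of_real (dt * G0) * (P0 - of_real (kappa * lm) * U0)
       - of_real (dt * G1) * (3/2 * (P0 - of_real (kappa * lm) * U0) - 2 * (Pm1 - of_real (kappa * lm) * Um1) + 1/2 * (Pm2 - of_real (kappa * lm) * Um2))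
       - of_real (dt * G2) * (1/2 * (P0 - of_real (kappa * lm) * U0) - (Pm1 - of_real (kappa * lm) * Um1) + 1/2 * (Pm2 - of_real (kappa * lm) * Um2))"
  shows "Re (P0 * cnj (U1 - U0)) + lm * (cmod (U1 - U0))\<^sup>2 / 2 + eps\<^sup>2 / 2 * (lm\<^sup>2 * (cmod U1)\<^sup>2 - lm\<^sup>2 * (cmod U0)\<^sup>2)
    = (- (1 / (dt * G0) + A * dt\<^sup>2 * lm\<^sup>2) + lm / 2 + eps\<^sup>2 * lm\<^sup>2 / 2) * (cmod (U1 - U0))\<^sup>2
      - ((3 * G1 + G2) / (2 * G0)) * Re ((P0 - Pm1) * cnj (U1 - U0))
      + kappa * lm * ((3 * G1 + G2) / (2 * G0)) * Re ((U0 - Um1) * cnj (U1 - U0))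
      + ((G1 + G2) / (2 * G0)) * Re ((Pm1 - Pm2) * cnj (U1 - U0))
      - kappa * lm * ((G1 + G2) / (2 * G0)) * Re ((Um1 - Um2) * cnj (U1 - U0))"
    (is "?L = ?R")
proof -
  have dG: "dt * G0 \<noteq> 0" using dt G0 by simp
  define M where "M = 1 / (dt * G0) + A * dt\<^sup>2 * lm\<^sup>2"
  define r1 where "r1 = (3 * G1 + G2) / (2 * G0)"
  define r2 where "r2 = (G1 + G2) / (2 * G0)"
  define W where "W = (\<lambda>u1 u0 um1 um2 p0 pm1 pm2 :: real. p0 + M * (u1 - u0) + eps\<^sup>2 * lm\<^sup>2 * u0
      + r1 * (p0 - pm1 - kappa * lm * (u0 - um1)) - r2 * (pm1 - pm2 - kappa * lm * (um1 - um2)))"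
  have "W (Re U1) (Re U0) (Re Um1) (Re Um2) (Re P0) (Re Pm1) (Re Pm2) = 0"
    unfolding W_def M_def r1_def r2_def
    by (rule etd_mode_residual[OF dG]) (use arg_cong[OF sch, of Re] in \<open>simp add: e Lam\<close>)
  moreover have "W (Im U1) (Im U0) (Im Um1) (Im Um2) (Im P0) (Im Pm1) (Im Pm2) = 0"
    unfolding W_def M_def r1_def r2_def
    by (rule etd_mode_residual[OF dG]) (use arg_cong[OF sch, of Im] in \<open>simp add: e Lam\<close>)
  moreover have "?L - ?R = W (Re U1) (Re U0) (Re Um1) (Re Um2) (Re P0) (Re Pm1) (Re Pm2) * (Re U1 - Re U0)
      + W (Im U1) (Im U0) (Im Um1) (Im Um2) (Im P0) (Im Pm1) (Im Pm2) * (Im U1 - Im U0)"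
    unfolding M_def[symmetric] r1_def[symmetric] r2_def[symmetric] cmod_power2 W_def
    by (simp add: field_simps power2_eq_square)
  ultimately show ?thesis by simp
qed

lemma dft_fN: "k \<in> modes K \<Longrightarrow> l \<in> modes K \<Longrightarrow>
  dft K (fN K kappa v) k l = dft K (nonlin K v) k l - of_real (kappa * lam k l) * dft K v k l"
  unfolding fN_eq_nonlin by (simp add: dft_add dft_scale dft_LapN)

lemma dft_etd_step:
  assumes "etd_step K eps kappa dt A u n" and k: "k \<in> modes K" and l: "l \<in> modes K"
  shows "dft K (u (n + 1)) k l =
      of_real (exp (- dt * LamL eps kappa k l)) * dft K (u n) k l
    - of_real (A * dt ^ 3 * g0 (dt * LamL eps kappa k l) * (lam k l)\<^sup>2) * (dft K (u (n + 1)) k l - dft K (u n) k l)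
    - of_real (dt * g0 (dt * LamL eps kappa k l)) * (dft K (nonlin K (u n)) k l - of_real (kappa * lam k l) * dft K (u n) k l)
    - of_real (dt * g1 (dt * LamL eps kappa k l)) * (3/2 * (dft K (nonlin K (u n)) k l - of_real (kappa * lam k l) * dft K (u n) k l)
         - 2 * (dft K (nonlin K (u (n - 1))) k l - of_real (kappa * lam k l) * dft K (u (n - 1)) k l)
         + 1/2 * (dft K (nonlin K (u (n - 2))) k l - of_real (kappa * lam k l) * dft K (u (n - 2)) k l))
    - of_real (dt * g2 (dt * LamL eps kappa k l)) * (1/2 * (dft K (nonlin K (u n)) k l - of_real (kappa * lam k l) * dft K (u n) k l)
         - (dft K (nonlin K (u (n - 1))) k l - of_real (kappa * lam k l) * dft K (u (n - 1)) k l)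
         + 1/2 * (dft K (nonlin K (u (n - 2))) k l - of_real (kappa * lam k l) * dft K (u (n - 2)) k l))"
    (is "_ = ?rhs")
proof -
  let ?F = "\<lambda>m. dft K (fN K kappa (u m)) k l"
  let ?G = "\<lambda>g. of_real (g (dt * LamL eps kappa k l))"
  have "dft K (u (n + 1)) k l = dft K (etd_rhs K eps kappa dt A u n) k l"
    using assms(1) unfolding etd_step_def by (metis dft_cong)
  also have "\<dots> = of_real (exp (- dt * LamL eps kappa k l)) * dft K (u n) k l
    - of_real (A * dt ^ 3) * (?G g0 * (of_real ((lam k l)\<^sup>2) * (dft K (u (n + 1)) k l - dft K (u n) k l)))
    - of_real dt * (?G g0 * ?F n)
    - of_real dt * (?G g1 * (of_real (3/2) * ?F n - of_real 2 * ?F (n - 1) + of_real (1/2) * ?F (n - 2)))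
    - of_real dt * (?G g2 * (of_real (1/2) * ?F n - ?F (n - 1) + of_real (1/2) * ?F (n - 2)))"
    unfolding etd_rhs_def using k l by (simp only: dft_diff dft_add dft_scale dft_expL dft_phiL dft_Lap2N)
  also have "\<dots> = ?rhs"
    using k l by (simp add: dft_fN field_simps)
  finally show ?thesis .
qed

lemma EN_increment_le:
  "EN K eps v - EN K eps w \<le> mode_sum K (\<lambda>k l.
      Re (dft K (nonlin K w) k l * cnj (dft K v k l - dft K w k l))
    + lam k l * (cmod (dft K v k l - dft K w k l))\<^sup>2 / 2
    + eps\<^sup>2 / 2 * ((lam k l)\<^sup>2 * (cmod (dft K v k l))\<^sup>2 - (lam k l)\<^sup>2 * (cmod (dft K w k l))\<^sup>2))"
  (is "_ \<le> ?S")
proof -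
  have "EN K eps v - EN K eps w \<le> ip K (nonlin K w) (\<lambda>a b. v a b - w a b)
      + 1/2 * gradnorm2sq K (\<lambda>a b. v a b - w a b)
      + eps\<^sup>2 / 2 * (norm2sq K (LapN K v) - norm2sq K (LapN K w))"
    using EN_ln_tangent_bound[of K v w] unfolding EN_eq_EN_ln by (simp add: algebra_simps)
  also have "\<dots> = ?S"
    unfolding ip_mode_sum gradnorm2sq_mode_sum norm2sq_LapN_mode_sum
    by (simp add: dft_diff mode_sum_def sum.distrib sum_subtractf sum_distrib_left sum_divide_distrib algebra_simps)
  finally show ?thesis .
qed

lemma nonlin_increment_weighted_bound:
  assumes even: "\<And>k l. r (- k) (- l) = r k l" and th: "0 < th"
  shows "\<bar>mode_sum K (\<lambda>k l. r k l * Re ((dft K (nonlin K v) k l - dft K (nonlin K v') k l) * cnj (dft K d k l)))\<bar>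
    \<le> 3/4 * (th * gradnorm2sq K (\<lambda>a b. v a b - v' a b)
         + mode_sum K (\<lambda>k l. lam k l * ((r k l)\<^sup>2 * (cmod (dft K d k l))\<^sup>2)) / th)"
proof -
  define w where "w = fmult K (\<lambda>k l. of_real (r k l)) d"
  have dw: "dft K w k l = of_real (r k l) * dft K d k l" if "k \<in> modes K" "l \<in> modes K" for k l
    unfolding w_def using that by (intro dft_fmult hermitian_of_real even)
  have "mode_sum K (\<lambda>k l. r k l * Re ((dft K (nonlin K v) k l - dft K (nonlin K v') k l) * cnj (dft K d k l)))
      = ip K (\<lambda>a b. nonlin K v a b - nonlin K v' a b) w"
    unfolding ip_mode_sum by (rule mode_sum_cong) (simp add: dw dft_diff algebra_simps)
  moreover have "gradnorm2sq K w = mode_sum K (\<lambda>k l. lam k l * ((r k l)\<^sup>2 * (cmod (dft K d k l))\<^sup>2))"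
    unfolding gradnorm2sq_mode_sum by (rule mode_sum_cong) (simp add: dw norm_mult power_mult_distrib)
  ultimately show ?thesis
    using nonlin_increment_bound[OF th, where K = K and u = v and v = v' and w = w] by simp
qed

definition modified_energy :: "nat \<Rightarrow> real \<Rightarrow> real \<Rightarrow> (int \<Rightarrow> grid) \<Rightarrow> int \<Rightarrow> real" where
  "modified_energy K eps kappa u m = EN K eps (u m)
     + gamma10 kappa * gradnorm2sq K (\<lambda>a b. u m a b - u (m - 1) a b)
     + gamma30 kappa * gradnorm2sq K (\<lambda>a b. u (m - 1) a b - u (m - 2) a b)"

locale etd_energy_step =
  fixes K :: nat and eps kappa dt A :: real and u :: "int \<Rightarrow> grid" and n :: int
  assumes eps_pos: "0 < eps" and kappa_pos: "0 < kappa" and dt_pos: "0 < dt"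
    and A_large: "2 * ((5 + 2 * kappa + gamma10 kappa) - kappa) * ((5 + 2 * kappa + gamma10 kappa) - kappa / 2) ^ 3
      \<le> A * eps\<^sup>2"
    and step: "etd_step K eps kappa dt A u n"
begin

definition Uh :: "int \<Rightarrow> int \<Rightarrow> int \<Rightarrow> complex" where
  "Uh m = dft K (u m)"

definition Ph :: "int \<Rightarrow> int \<Rightarrow> int \<Rightarrow> complex" where
  "Ph m = dft K (nonlin K (u m))"

definition dU :: "int \<Rightarrow> int \<Rightarrow> int \<Rightarrow> complex" where
  "dU m k l = Uh (m + 1) k l - Uh m k l"

definition xi :: "int \<Rightarrow> int \<Rightarrow> real" where
  "xi k l = dt * LamL eps kappa k l"

definition Mw :: "int \<Rightarrow> int \<Rightarrow> real" where
  "Mw k l = 1 / (dt * g0 (xi k l)) + A * dt\<^sup>2 * (lam k l)\<^sup>2"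

lemma xi_nonneg: "0 \<le> xi k l"
  using dt_pos kappa_pos by (simp add: xi_def LamL_def lam_nonneg)

lemma gradnorm2sq_increment:
  "gradnorm2sq K (\<lambda>a b. u (m + 1) a b - u m a b) = mode_sum K (\<lambda>k l. lam k l * (cmod (dU m k l))\<^sup>2)"
  by (simp add: gradnorm2sq_mode_sum dft_diff dU_def Uh_def)

definition lin_terms :: "int \<Rightarrow> int \<Rightarrow> real" where
  "lin_terms k l = (- Mw k l + lam k l / 2 + eps\<^sup>2 * (lam k l)\<^sup>2 / 2) * (cmod (dU n k l))\<^sup>2
    + kappa * lam k l * rho1 (xi k l) * Re (dU (n - 1) k l * cnj (dU n k l))
    - kappa * lam k l * rho2 (xi k l) * Re (dU (n - 2) k l * cnj (dU n k l))"

lemma energy_increment_le: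
  "EN K eps (u (n + 1)) - EN K eps (u n) \<le> mode_sum K lin_terms
    - mode_sum K (\<lambda>k l. rho1 (xi k l) * Re ((Ph n k l - Ph (n - 1) k l) * cnj (dU n k l)))
    + mode_sum K (\<lambda>k l. rho2 (xi k l) * Re ((Ph (n - 1) k l - Ph (n - 2) k l) * cnj (dU n k l)))"
proof -
  have "mode_sum K (\<lambda>k l. Re (Ph n k l * cnj (dU n k l)) + lam k l * (cmod (dU n k l))\<^sup>2 / 2
      + eps\<^sup>2 / 2 * ((lam k l)\<^sup>2 * (cmod (Uh (n + 1) k l))\<^sup>2 - (lam k l)\<^sup>2 * (cmod (Uh n k l))\<^sup>2))
    = mode_sum K (\<lambda>k l. lin_terms k l
      - rho1 (xi k l) * Re ((Ph n k l - Ph (n - 1) k l) * cnj (dU n k l))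
      + rho2 (xi k l) * Re ((Ph (n - 1) k l - Ph (n - 2) k l) * cnj (dU n k l)))"
  proof (rule mode_sum_cong, goal_cases)
    case (1 k l)
    have idx: "n - 1 + 1 = n" "n - 2 + 1 = n - 1" by simp_all
    from dft_etd_step[OF step 1]
    have "Re (Ph n k l * cnj (dU n k l)) + lam k l * (cmod (dU n k l))\<^sup>2 / 2
      + eps\<^sup>2 / 2 * ((lam k l)\<^sup>2 * (cmod (Uh (n + 1) k l))\<^sup>2 - (lam k l)\<^sup>2 * (cmod (Uh n k l))\<^sup>2)
      = (- Mw k l + lam k l / 2 + eps\<^sup>2 * (lam k l)\<^sup>2 / 2) * (cmod (dU n k l))\<^sup>2
      - rho1 (xi k l) * Re ((Ph n k l - Ph (n - 1) k l) * cnj (dU n k l))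
      + kappa * lam k l * rho1 (xi k l) * Re (dU (n - 1) k l * cnj (dU n k l))
      + rho2 (xi k l) * Re ((Ph (n - 1) k l - Ph (n - 2) k l) * cnj (dU n k l))
      - kappa * lam k l * rho2 (xi k l) * Re (dU (n - 2) k l * cnj (dU n k l))"
      unfolding dU_def idx Uh_def Ph_def Mw_def rho1_def rho2_def xi_def
      by (intro mode_energy_identity[OF dt_pos g0_pos[OF xi_nonneg[unfolded xi_def]] exp_neg_eq_g0])
        (simp_all add: LamL_def)
    also have "\<dots> = lin_terms k l
      - rho1 (xi k l) * Re ((Ph n k l - Ph (n - 1) k l) * cnj (dU n k l))
      + rho2 (xi k l) * Re ((Ph (n - 1) k l - Ph (n - 2) k l) * cnj (dU n k l))"
      by (simp add: lin_terms_def)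
    finally show ?case .
  qed
  thus ?thesis
    using EN_increment_le[of K eps "u (n + 1)" "u n"]
    by (simp add: dU_def Uh_def Ph_def mode_sum_def sum.distrib sum_subtractf)
qed

lemma history_terms_bound:
  "- mode_sum K (\<lambda>k l. rho1 (xi k l) * Re ((Ph n k l - Ph (n - 1) k l) * cnj (dU n k l)))
     \<le> 3/4 * mode_sum K (\<lambda>k l. lam k l * (cmod (dU (n - 1) k l))\<^sup>2)
       + 3/4 * mode_sum K (\<lambda>k l. lam k l * ((rho1 (xi k l))\<^sup>2 * (cmod (dU n k l))\<^sup>2))" (is ?first)
  "mode_sum K (\<lambda>k l. rho2 (xi k l) * Re ((Ph (n - 1) k l - Ph (n - 2) k l) * cnj (dU n k l)))
     \<le> 3/8 * mode_sum K (\<lambda>k l. lam k l * (cmod (dU (n - 2) k l))\<^sup>2)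
       + 3/2 * mode_sum K (\<lambda>k l. lam k l * ((rho2 (xi k l))\<^sup>2 * (cmod (dU n k l))\<^sup>2))" (is ?second)
proof -
  have even: "rho1 (xi (- k) (- l)) = rho1 (xi k l)" "rho2 (xi (- k) (- l)) = rho2 (xi k l)" for k l
    by (simp_all add: xi_def)
  have dU_eq: "dU n = dft K (\<lambda>a b. u (n + 1) a b - u n a b)"
    by (intro ext) (simp add: dU_def Uh_def dft_diff)
  have grad: "gradnorm2sq K (\<lambda>a b. u n a b - u (n - 1) a b) = mode_sum K (\<lambda>k l. lam k l * (cmod (dU (n - 1) k l))\<^sup>2)"
    "gradnorm2sq K (\<lambda>a b. u (n - 1) a b - u (n - 2) a b) = mode_sum K (\<lambda>k l. lam k l * (cmod (dU (n - 2) k l))\<^sup>2)"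
    using gradnorm2sq_increment[of "n - 1"] gradnorm2sq_increment[of "n - 2"] by simp_all
  show ?first
    using nonlin_increment_weighted_bound[of "\<lambda>k l. rho1 (xi k l)" 1 K "u n" "u (n - 1)" "\<lambda>a b. u (n + 1) a b - u n a b"]
    unfolding dU_eq Ph_def grad[symmetric] by (simp add: even)
  show ?second
    using nonlin_increment_weighted_bound[of "\<lambda>k l. rho2 (xi k l)" "1/2" K "u (n - 1)" "u (n - 2)" "\<lambda>a b. u (n + 1) a b - u n a b"]
    unfolding dU_eq Ph_def grad[symmetric] by (simp add: even)
qed

lemma lin_terms_absorb:
  "mode_sum K lin_terms
    + 3/4 * mode_sum K (\<lambda>k l. lam k l * ((rho1 (xi k l))\<^sup>2 * (cmod (dU n k l))\<^sup>2))
    + 3/2 * mode_sum K (\<lambda>k l. lam k l * ((rho2 (xi k l))\<^sup>2 * (cmod (dU n k l))\<^sup>2))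
    + gamma10 kappa * mode_sum K (\<lambda>k l. lam k l * (cmod (dU n k l))\<^sup>2)
    + (3/4 + gamma30 kappa - gamma10 kappa) * mode_sum K (\<lambda>k l. lam k l * (cmod (dU (n - 1) k l))\<^sup>2)
    + (3/8 - gamma30 kappa) * mode_sum K (\<lambda>k l. lam k l * (cmod (dU (n - 2) k l))\<^sup>2) \<le> 0"
proof -
  have kappa: "0 \<le> kappa" using kappa_pos by simp
  have "mode_sum K (\<lambda>k l. lin_terms k l
      + 3/4 * (lam k l * (rho1 (xi k l))\<^sup>2 * (cmod (dU n k l))\<^sup>2)
      + 3/2 * (lam k l * (rho2 (xi k l))\<^sup>2 * (cmod (dU n k l))\<^sup>2)
      + gamma10 kappa * lam k l * (cmod (dU n k l))\<^sup>2
      + (3/4 + gamma30 kappa - gamma10 kappa) * lam k l * (cmod (dU (n - 1) k l))\<^sup>2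
      + (3/8 - gamma30 kappa) * lam k l * (cmod (dU (n - 2) k l))\<^sup>2) \<le> mode_sum K (\<lambda>k l. 0)"
  proof (rule mode_sum_mono, goal_cases)
    case (1 k l)
    have "kappa \<le> 5 + 2 * kappa + gamma10 kappa" using gamma_weights(1)[OF kappa] kappa by linarith
    hence "eps\<^sup>2 * (lam k l)\<^sup>2 / 2 + (5 + 2 * kappa + gamma10 kappa) * lam k l \<le> Mw k l"
      using mode_weight_lower_bound[OF eps_pos kappa_pos dt_pos lam_nonneg[of k l] _ A_large]
      by (simp add: Mw_def xi_def LamL_def)
    moreover have "2 * Re (dU (n - 1) k l * cnj (dU n k l)) \<le> (cmod (dU (n - 1) k l))\<^sup>2 + (cmod (dU n k l))\<^sup>2"
      using young_ineq_complex[of 1 "dU (n - 1) k l" "dU n k l"] by simp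
    moreover have "- 2 * Re (dU (n - 2) k l * cnj (dU n k l)) \<le> (cmod (dU (n - 2) k l))\<^sup>2 / 2 + 2 * (cmod (dU n k l))\<^sup>2"
      using young_ineq_complex[of "1/2" "- dU (n - 2) k l" "dU n k l"] by simp
    ultimately show ?case
      unfolding lin_terms_def
      by (intro mode_form_nonpos lam_nonneg rho_bounds[OF xi_nonneg] zero_le_power2 kappa gamma_weights(3,4))
  qed
  thus ?thesis
    by (simp add: mode_sum_def sum.distrib sum_subtractf sum_distrib_left sum_divide_distrib algebra_simps)
qed

lemma modified_energy_step: "modified_energy K eps kappa u (n + 1) \<le> modified_energy K eps kappa u n"
proof -
  have idx: "n - 1 + 1 = n" "n - 2 + 1 = n - 1" by simp_all
  have grad: "gradnorm2sq K (\<lambda>a b. u (n + 1) a b - u n a b) = mode_sum K (\<lambda>k l. lam k l * (cmod (dU n k l))\<^sup>2)"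
    "gradnorm2sq K (\<lambda>a b. u n a b - u (n - 1) a b) = mode_sum K (\<lambda>k l. lam k l * (cmod (dU (n - 1) k l))\<^sup>2)"
    "gradnorm2sq K (\<lambda>a b. u (n - 1) a b - u (n - 2) a b) = mode_sum K (\<lambda>k l. lam k l * (cmod (dU (n - 2) k l))\<^sup>2)"
    using gradnorm2sq_increment[of n] gradnorm2sq_increment[of "n - 1"] gradnorm2sq_increment[of "n - 2"]
    unfolding idx by simp_all
  show ?thesis
    using energy_increment_le history_terms_bound lin_terms_absorb
    unfolding modified_energy_def grad[symmetric] by (simp add: algebra_simps)
qed

end

lemma nonincreasing_from_0_le:
  fixes f :: "int \<Rightarrow> 'a::order"
  assumes "\<And>n. 0 \<le> n \<Longrightarrow> f (n + 1) \<le> f n" and "0 \<le> k"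
  shows "f k \<le> f 0"
  using assms(2)
proof (induction k rule: int_ge_induct)
  case (step i)
  thus ?case using assms(1)[of i] by simp
qed simp

theorem corollary2p1:
  fixes eps kappa dt A :: real and K :: nat and u :: "int \<Rightarrow> grid"
  assumes "eps > 0" and "kappa \<ge> 1/4" and "dt > 0"
    and "A \<ge> (gamma0 kappa - kappa / 4) ^ 4 / ((alpha0 kappa)\<^sup>2 * eps\<^sup>2)"
    and "gmean K (u (-2)) = gmean K (u 0)" and "gmean K (u (-1)) = gmean K (u 0)"
    and scheme: "\<And>n i j. n \<ge> 0 \<Longrightarrow> i < gridN K \<Longrightarrow> j < gridN K \<Longrightarrow>
      u (n + 1) i j =
        expL K eps kappa dt (u n) i j
      - A * dt ^ 3 * phiL g0 K eps kappa dt (Lap2N K (\<lambda>a b. u (n + 1) a b - u n a b)) i j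
      - dt * phiL g0 K eps kappa dt (fN K kappa (u n)) i j
      - dt * phiL g1 K eps kappa dt (\<lambda>a b. 3/2 * fN K kappa (u n) a b
            - 2 * fN K kappa (u (n - 1)) a b + 1/2 * fN K kappa (u (n - 2)) a b) i j
      - dt * phiL g2 K eps kappa dt (\<lambda>a b. 1/2 * fN K kappa (u n) a b
            - fN K kappa (u (n - 1)) a b + 1/2 * fN K kappa (u (n - 2)) a b) i j"
  shows "\<forall>k \<ge> 0. EN K eps (u k) \<le> EN K eps (u 0)
      + gamma10 kappa * gradnorm2sq K (\<lambda>a b. u 0 a b - u (-1) a b)
      + gamma30 kappa * gradnorm2sq K (\<lambda>a b. u (-1) a b - u (-2) a b)"
proof -
  have kappa: "0 < kappa" using assms(2) by simp
  have step: "modified_energy K eps kappa u (n + 1) \<le> modified_energy K eps kappa u n" if "0 \<le> n" for n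
  proof (rule etd_energy_step.modified_energy_step, unfold_locales)
    show "etd_step K eps kappa dt A u n"
      using scheme[OF that] unfolding etd_step_def etd_rhs_def by blast
  qed (use assms(1,3,4) kappa A_lower_bound in auto)
  have "EN K eps (u k) \<le> modified_energy K eps kappa u 0" if "0 \<le> k" for k
  proof -
    have "EN K eps (u k) \<le> modified_energy K eps kappa u k"
      using gradnorm2sq_nonneg gamma_weights(1,2) kappa unfolding modified_energy_def
      by (simp add: add_nonneg_nonneg)
    also have "\<dots> \<le> modified_energy K eps kappa u 0"
      using nonincreasing_from_0_le[where f = "modified_energy K eps kappa u", OF step that] .
    finally show ?thesis .
  qed
  thus ?thesis by (simp add: modified_energy_def)
qed

end
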